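(* Let $n\ge2$ and $k\in\mathbb{N}_0$. A function $u\in\mathcal{C}^\infty(\mathbb{R}^{n-1}\times\mathbb{S}^{n-1}_+)$ satisfies $u(\bar a,v)=R^kf((\bar a,0),v)$ for all $\bar a\in\mathbb{R}^{n-1}$, $v\in\mathbb{S}^{n-1}_+$, for some $f\in\mathcal{C}_c^\infty(\mathbb{R}^n_+)$, if and only if the scaled projective data \[ w(\bar a,\bar p):=v_n^{k+1}u(\bar a,v),\qquad \bar p=\bar v/v_n\in\mathbb{R}^{n-1},\ v=(\bar v,v_n)\in\mathbb{S}^{n-1}_+, \] and its Fourier transform $W(\bar a,\bar\xi)=\int_{\mathbb{R}^{n-1}}e^{-i\bar p\cdot\bar\xi}w(\bar a,\bar p)\,d\bar p$ satisfy: (i) (Compact support) for each fixed $\bar a\in\mathbb{R}^{n-1}$, $w(\bar a,\cdot)$ has compact support; (ii) (PDE condition) there is a function $H(\sigma,\bar\xi)$ on $\mathbb{R}\times\mathbb{R}^{n-1}$ with $W(\bar a,\bar\xi)=H(\bar a\cdot\bar\xi,\bar\xi)$; equivalently, $\bar b\cdot\nabla_{\bar a}W(\bar a,\bar\xi)=0$ for all $\bar b\in\mathbb{R}^{n-1}$ with $\bar b\cdot\bar\xi=0$; (iii) (Support and smoothness) the full inverse Fourier transform \[ h(t,\bar p):=\frac{1}{(2\pi)^n}\int_{\mathbb{R}^{n-1}}\int_{\mathbb{R}}e^{i(t\sigma+\bar p\cdot\bar\xi)}H(\sigma,\bar\xi)\,d\sigma\,d\bar\xi \] is a smooth function on $\mathbb{R}\times\mathbb{R}^{n-1}$,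 and there are constants $0<m_0<M_0<\infty$ and $R>0$ with $\operatorname{supp}h\subset\{(t,\bar p): t\in[-M_0,-m_0],\ |\bar p|\le -Rt\}$.
   Context: Write points of $\mathbb{R}^n$ as $x=(\bar x,x_n)$ with $\bar x\in\mathbb{R}^{n-1}$; bars always denote elements of $\mathbb{R}^{n-1}$. $\mathbb{R}^n_+:=\mathbb{R}^{n-1}\times(0,\infty)$ and $\mathbb{S}^{n-1}_+:=\{v=(\bar v,v_n)\in\mathbb{S}^{n-1}: v_n>0\}$. The source set is the hyperplane $\mathbb{R}^{n-1}\times\{0\}$, with source points $a=(\bar a,0)$. The $k$-weighted divergent beam transform is $R^kf(a,v):=\int_0^\infty f(a+rv)\,r^k\,dr$. Fourier transforms are understood in the sense of tempered distributions where needed. *)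

theory Defs
  imports "HOL-Analysis.Analysis"
begin

text \<open>Conventions. The space R^(n-1) is an arbitrary Euclidean space 'a (so n-1 = DIM('a) \<ge> 1,
 i.e. n \<ge> 2); points of R^n are pairs (xbar, x_n) :: 'a \<times> real.\<close>

text \<open>Iterated partial derivatives along a list of directions (applied from the end of the list).\<close>
inductive iter_partial :: "'a::euclidean_space set \<Rightarrow> ('a \<Rightarrow> 'b::real_normed_vector)
    \<Rightarrow> 'a list \<Rightarrow> ('a \<Rightarrow> 'b) \<Rightarrow> bool" where
  base: "iter_partial S f [] f"
| step: "iter_partial S f ds g \<Longrightarrow>
         (\<forall>x\<in>S. ((\<lambda>t. g (x + t *\<^sub>R d)) has_vector_derivative g' x) (at 0)) \<Longrightarrow>
         iter_partial S f (d # ds) g'"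

definition smooth_on :: "'a::euclidean_space set \<Rightarrow> ('a \<Rightarrow> 'b::real_normed_vector) \<Rightarrow> bool" where
  "smooth_on S f \<longleftrightarrow> open S \<and>
     (\<forall>ds. set ds \<subseteq> Basis \<longrightarrow> (\<exists>g. iter_partial S f ds g \<and> continuous_on S g))"

definition tsupp :: "('a::topological_space \<Rightarrow> 'b::zero) \<Rightarrow> 'a set" where
  "tsupp f = closure {x. f x \<noteq> 0}"

definition upper_half :: "('a::euclidean_space \<times> real) set" where
  "upper_half = {x. snd x > 0}"

definition upper_hemisphere :: "('a::euclidean_space \<times> real) set" where
  "upper_hemisphere = {v. norm v = 1 \<and> snd v > 0}"

text \<open>f \<in> C_c^\<infinity>(R^n_+) (f is extended by zero outside R^n_+).\<close>
definition Cc_inf_half :: "('a::euclidean_space \<times> real \<Rightarrow> real) \<Rightarrow> bool" where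
  "Cc_inf_half f \<longleftrightarrow> smooth_on upper_half f \<and> compact (tsupp f) \<and> tsupp f \<subseteq> upper_half"

definition beam_transform :: "nat \<Rightarrow> ('a::euclidean_space \<times> real \<Rightarrow> real)
    \<Rightarrow> 'a \<times> real \<Rightarrow> 'a \<times> real \<Rightarrow> real" where
  "beam_transform k f a v = (LINT r:{0..}|lborel. f (a + r *\<^sub>R v) * r ^ k)"

text \<open>The (gnomonic) chart p \<mapsto> v = (p,1)/|(p,1)|, inverse of v \<mapsto> vbar/v_n.\<close>
definition hemi_point :: "'a::euclidean_space \<Rightarrow> 'a \<times> real" where
  "hemi_point p = (1 / norm (p, 1::real)) *\<^sub>R (p, 1)"

text \<open>Smoothness on R^(n-1) \<times> S^(n-1)_+, expressed in the global chart above.\<close>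
definition smooth_on_hemi :: "('a::euclidean_space \<Rightarrow> 'a \<times> real \<Rightarrow> real) \<Rightarrow> bool" where
  "smooth_on_hemi u \<longleftrightarrow> smooth_on UNIV (\<lambda>(a, p). u a (hemi_point p))"

definition proj_data :: "nat \<Rightarrow> ('a::euclidean_space \<Rightarrow> 'a \<times> real \<Rightarrow> real) \<Rightarrow> 'a \<Rightarrow> 'a \<Rightarrow> real" where
  "proj_data k u a p = (snd (hemi_point p)) ^ (k + 1) * u a (hemi_point p)"

definition fourier_p :: "('a::euclidean_space \<Rightarrow> 'a \<Rightarrow> real) \<Rightarrow> 'a \<Rightarrow> 'a \<Rightarrow> complex" where
  "fourier_p w a xi = (\<integral>p. exp (- \<i> * complex_of_real (p \<bullet> xi)) * complex_of_real (w a p) \<partial>lborel)"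

definition fourier_full :: "(real \<times> 'a::euclidean_space \<Rightarrow> complex) \<Rightarrow> real \<times> 'a \<Rightarrow> complex" where
  "fourier_full h z = (\<integral>x. exp (- \<i> * complex_of_real (fst x * fst z + snd x \<bullet> snd z)) * h x \<partial>lborel)"

text \<open>h is the (tempered-distributional) inverse Fourier transform
 h = (2\<pi>)^(-n) \<integral>\<integral> e^(i(t s + p\<cdot>xi)) H(s,xi) ds dxi.  For h smooth with compact support
 this holds iff H coincides a.e. with the classical Fourier transform of h.\<close>
definition inv_fourier_of :: "(real \<times> 'a::euclidean_space \<Rightarrow> complex) \<Rightarrow> (real \<times> 'a \<Rightarrow> complex) \<Rightarrow> bool" where
  "inv_fourier_of h H \<longleftrightarrow> (AE z in lborel. H z = fourier_full h z)"

end

(*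
  If u = R^k f, the substitution r = s |(p, 1)| turns the beam transform into the scaled data
  w(a, p) = int f(a + s p, s) s^k ds.  The further substitution (y, s) = (q / (-t), -1 / t)
  and Fubini show that the Fourier transform of w(a, .) is W(a, xi) = h^(a . xi, xi), where
  h(t, q) = (-1/t)^(k+2) f(-q/t, -1/t) is smooth and supported in a truncated cone; this gives
  conditions (i)-(iii) with H = h^.

  Conversely, inverting the substitution turns h into a smooth f with compact support in the
  upper half space, whose data w' satisfies W'(a, xi) = h^(a . xi, xi) = H(a . xi, xi) = W(a, xi)
  for almost every (a, xi): the map (a, xi) |-> (a . xi, xi) pulls null sets back to null sets.
  As both sides are continuous and the Fourier transform is injective on continuous functions
  with compact support (Stone-Weierstrass for trigonometric polynomials), w' = w, so u = R^k f.
*)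

theory Submission
  imports Defs
begin

section \<open>Calculus of smooth functions\<close>

definition has_partial :: "'a::euclidean_space set \<Rightarrow> ('a \<Rightarrow> 'b::real_normed_vector) \<Rightarrow> 'a \<Rightarrow> ('a \<Rightarrow> 'b) \<Rightarrow> bool" where
  "has_partial S f d f1 \<longleftrightarrow> (\<forall>x\<in>S. ((\<lambda>t. f (x + t *\<^sub>R d)) has_vector_derivative f1 x) (at 0))"

lemma iter_partial_Nil_iff: "iter_partial S f [] g \<longleftrightarrow> g = f"
  by (auto elim: iter_partial.cases intro: iter_partial.base)

lemma iter_partial_Cons_iff: "iter_partial S f (d#ds) g' \<longleftrightarrow> (\<exists>g. iter_partial S f ds g \<and> has_partial S g d g')"
  unfolding has_partial_def
  by (auto elim: iter_partial.cases intro: iter_partial.step)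

lemma iter_partial_snoc: "has_partial S f d f1 \<Longrightarrow> iter_partial S f1 ds g \<Longrightarrow> iter_partial S f (ds @ [d]) g"
proof (induction ds arbitrary: g)
  case Nil
  then show ?case by (auto simp: iter_partial_Cons_iff iter_partial_Nil_iff)
next
  case (Cons d' ds)
  then show ?case by (auto simp: iter_partial_Cons_iff)
qed

lemma iter_partial_snocE: "iter_partial S f (ds @ [d]) g \<Longrightarrow> \<exists>f1. has_partial S f d f1 \<and> iter_partial S f1 ds g"
proof (induction ds arbitrary: g)
  case Nil
  then show ?case by (auto simp: iter_partial_Cons_iff iter_partial_Nil_iff)
next
  case (Cons d' ds)
  then show ?case by (fastforce simp: iter_partial_Cons_iff)
qed

definition partials_continuous :: "'a::euclidean_space set \<Rightarrow> nat \<Rightarrow> ('a \<Rightarrow> 'b::real_normed_vector) \<Rightarrow> bool" where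
  "partials_continuous S n f \<longleftrightarrow> (\<forall>ds. length ds = n \<longrightarrow> set ds \<subseteq> Basis \<longrightarrow> (\<exists>g. iter_partial S f ds g \<and> continuous_on S g))"

lemma smooth_on_iff_partials_continuous: "smooth_on S f \<longleftrightarrow> open S \<and> (\<forall>n. partials_continuous S n f)"
  by (auto simp: smooth_on_def partials_continuous_def)

lemma partials_continuous_0_iff: "partials_continuous S 0 f \<longleftrightarrow> continuous_on S f"
  by (auto simp: partials_continuous_def iter_partial_Nil_iff)

lemma partials_continuous_SucI:
  assumes "\<And>d. d \<in> Basis \<Longrightarrow> \<exists>f1. has_partial S f d f1 \<and> partials_continuous S n f1"
  shows "partials_continuous S (Suc n) f"
  unfolding partials_continuous_def
proof (intro allI impI)
  fix ds :: "'a list" assume l: "length ds = Suc n" and s: "set ds \<subseteq> Basis"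
  obtain ds' d where ds: "ds = ds' @ [d]"
    using l by (cases ds rule: rev_exhaust) auto
  have "d \<in> Basis" using s ds by auto
  then obtain f1 where f1: "has_partial S f d f1" "partials_continuous S n f1" using assms by blast
  then obtain g where "iter_partial S f1 ds' g" "continuous_on S g"
    using l s ds unfolding partials_continuous_def by auto
  then show "\<exists>g. iter_partial S f ds g \<and> continuous_on S g"
    using iter_partial_snoc[OF f1(1)] ds by blast
qed

lemma has_partial_unique: "has_partial S f d f1 \<Longrightarrow> has_partial S f d f2 \<Longrightarrow> x \<in> S \<Longrightarrow> f1 x = f2 x"
  unfolding has_partial_def using vector_derivative_unique_at by blast

lemma open_line_preimage:
  fixes x d :: "'a::real_normed_vector"
  shows "open S \<Longrightarrow> open {t::real. x + t *\<^sub>R d \<in> S}"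
proof -
  assume "open S"
  have "continuous_on UNIV (\<lambda>t::real. x + t *\<^sub>R d)" by (intro continuous_intros)
  then show ?thesis using \<open>open S\<close> open_vimage[of S "\<lambda>t::real. x + t *\<^sub>R d"] by (simp add: vimage_def)
qed

lemma has_partial_cong:
  assumes "open S" "has_partial S f d f1" "\<And>x. x \<in> S \<Longrightarrow> f x = g x" "\<And>x. x \<in> S \<Longrightarrow> f1 x = g1 x"
  shows "has_partial S g d g1"
  unfolding has_partial_def
proof
  fix x assume x: "x \<in> S"
  have "((\<lambda>t. f (x + t *\<^sub>R d)) has_vector_derivative f1 x) (at 0)"
    using assms(2) x unfolding has_partial_def by blast
  then have "((\<lambda>t. g (x + t *\<^sub>R d)) has_vector_derivative f1 x) (at 0)"
    by (rule has_vector_derivative_transform_within_open[OF _ open_line_preimage[OF assms(1), of x d]])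
       (use x assms(3) in auto)
  then show "((\<lambda>t. g (x + t *\<^sub>R d)) has_vector_derivative g1 x) (at 0)"
    using assms(4) x by simp
qed

lemma iter_partial_cong:
  assumes "iter_partial S f ds g" "open S" "\<And>x. x \<in> S \<Longrightarrow> f x = f' x"
  shows "\<exists>g'. iter_partial S f' ds g' \<and> (\<forall>x\<in>S. g' x = g x)"
  using assms
proof (induction rule: iter_partial.induct)
  case (base S f)
  then show ?case by (auto intro: iter_partial.base)
next
  case (step S f ds g d g')
  then obtain g0 where g0: "iter_partial S f' ds g0" "\<forall>x\<in>S. g0 x = g x" by blast
  have "has_partial S g d g'" using step.hyps(2) unfolding has_partial_def by blast
  then have "has_partial S g0 d g'" using has_partial_cong[of S g d g' g0 g'] g0(2) step.prems by auto
  then show ?case using g0 by (auto simp: iter_partial_Cons_iff)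
qed

lemma smooth_on_has_partial:
  assumes "smooth_on S f" "d \<in> Basis"
  shows "\<exists>f1. has_partial S f d f1 \<and> smooth_on S f1"
proof -
  have S: "open S" using assms by (simp add: smooth_on_def)
  have "set [d] \<subseteq> Basis" using assms by simp
  then obtain g where "iter_partial S f [d] g" using assms unfolding smooth_on_def by blast
  then have g: "has_partial S f d g" by (auto simp: iter_partial_Cons_iff iter_partial_Nil_iff)
  have "smooth_on S g"
    unfolding smooth_on_def
  proof (intro conjI allI impI S)
    fix ds :: "'a list" assume "set ds \<subseteq> Basis"
    then obtain G where G: "iter_partial S f (ds @ [d]) G" "continuous_on S G"
      using assms unfolding smooth_on_def by (metis Un_subset_iff empty_subsetI insert_subset set_append set_simps)
    obtain f1 where f1: "has_partial S f d f1" "iter_partial S f1 ds G" using iter_partial_snocE[OF G(1)] by blast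
    have "\<forall>x\<in>S. f1 x = g x" using has_partial_unique[OF f1(1) g] by blast
    then obtain G' where "iter_partial S g ds G'" "\<forall>x\<in>S. G' x = G x"
      using iter_partial_cong[OF f1(2) S] by metis
    then show "\<exists>g'. iter_partial S g ds g' \<and> continuous_on S g'"
      using G(2) continuous_on_cong by (metis (no_types, lifting))
  qed
  then show ?thesis using g by blast
qed

lemma smooth_on_imp_continuous_on: "smooth_on S f \<Longrightarrow> continuous_on S f"
  using partials_continuous_0_iff smooth_on_iff_partials_continuous by blast

lemma smooth_onI:
  assumes "open S" "continuous_on S f" "\<And>d. d \<in> Basis \<Longrightarrow> \<exists>f1. has_partial S f d f1 \<and> smooth_on S f1"
  shows "smooth_on S f"
proof -
  have "partials_continuous S n f" for n
  proof (cases n)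
    case 0 then show ?thesis using assms by (simp add: partials_continuous_0_iff)
  next
    case (Suc m) then show ?thesis
      using assms(3) partials_continuous_SucI smooth_on_iff_partials_continuous by metis
  qed
  then show ?thesis using assms smooth_on_iff_partials_continuous by blast
qed

lemma smooth_on_cong:
  assumes "smooth_on S f" "\<And>x. x \<in> S \<Longrightarrow> f x = g x"
  shows "smooth_on S g"
proof -
  have S: "open S" using assms by (simp add: smooth_on_def)
  show ?thesis
    unfolding smooth_on_def
  proof (intro conjI allI impI S)
    fix ds :: "'a list" assume "set ds \<subseteq> Basis"
    then obtain G where G: "iter_partial S f ds G" "continuous_on S G"
      using assms unfolding smooth_on_def by blast
    then obtain G' where "iter_partial S g ds G'" "\<forall>x\<in>S. G' x = G x"
      using iter_partial_cong[OF G(1) S] assms(2) by metis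
    then show "\<exists>g'. iter_partial S g ds g' \<and> continuous_on S g'"
      using G(2) continuous_on_cong by (metis (no_types, lifting))
  qed
qed

lemma has_partial_zero: "has_partial S (\<lambda>x. 0) d (\<lambda>x. 0)"
  by (simp add: has_partial_def)

lemma iter_partial_zero: "iter_partial S (\<lambda>x. 0) ds (\<lambda>x. 0)"
  by (induction ds) (auto simp: iter_partial_Cons_iff iter_partial_Nil_iff has_partial_zero)

lemma has_partial_add: "has_partial S f d f1 \<Longrightarrow> has_partial S g d g1 \<Longrightarrow> has_partial S (\<lambda>x. f x + g x) d (\<lambda>x. f1 x + g1 x)"
  unfolding has_partial_def by (auto intro: has_vector_derivative_add)

lemma iter_partial_add: "iter_partial S f ds F \<Longrightarrow> iter_partial S g ds G \<Longrightarrow>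
   iter_partial S (\<lambda>x. f x + g x) ds (\<lambda>x. F x + G x)"
proof (induction ds arbitrary: F G)
  case Nil
  then show ?case by (simp add: iter_partial_Nil_iff)
next
  case (Cons d ds)
  then show ?case by (metis iter_partial_Cons_iff has_partial_add)
qed

lemma partials_continuous_add: "partials_continuous S n f \<Longrightarrow> partials_continuous S n g \<Longrightarrow> partials_continuous S n (\<lambda>x. f x + g x)"
  unfolding partials_continuous_def
proof (intro allI impI)
  fix ds :: "'a list"
  assume A: "\<forall>ds. length ds = n \<longrightarrow> set ds \<subseteq> Basis \<longrightarrow> (\<exists>g. iter_partial S f ds g \<and> continuous_on S g)"
    and B: "\<forall>ds. length ds = n \<longrightarrow> set ds \<subseteq> Basis \<longrightarrow> (\<exists>ga. iter_partial S g ds ga \<and> continuous_on S ga)"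
    and l: "length ds = n" "set ds \<subseteq> Basis"
  obtain F G where "iter_partial S f ds F" "continuous_on S F" "iter_partial S g ds G" "continuous_on S G"
    using A B l by blast
  then show "\<exists>ga. iter_partial S (\<lambda>x. f x + g x) ds ga \<and> continuous_on S ga"
    using iter_partial_add continuous_on_add by blast
qed

lemma partials_continuous_zero: "partials_continuous S n (\<lambda>x. 0)"
  unfolding partials_continuous_def using iter_partial_zero[of S _] continuous_on_const by blast

lemma partials_continuous_sum: "finite I \<Longrightarrow> (\<And>i. i \<in> I \<Longrightarrow> partials_continuous S n (f i)) \<Longrightarrow> partials_continuous S n (\<lambda>x. \<Sum>i\<in>I. f i x)"
proof (induction I rule: finite_induct)
  case empty
  then show ?case using partials_continuous_zero by simp
next
  case (insert i I)
  have a: "partials_continuous S n (f i)" using insert.prems by simp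
  have b: "partials_continuous S n (\<lambda>x. \<Sum>i\<in>I. f i x)" using insert.prems by (intro insert.IH) simp
  have "partials_continuous S n (\<lambda>x. f i x + (\<Sum>i\<in>I. f i x))" using partials_continuous_add[OF a b] .
  then show ?case using insert.hyps by simp
qed

text \<open>Partial derivatives of products and compositions are finite sums of terms of the same
  shape, so closure properties of \<open>smooth_on\<close> follow from this principle.\<close>
lemma smooth_on_coinduct:
  fixes P :: "('a::euclidean_space \<Rightarrow> 'b::real_normed_vector) \<Rightarrow> bool"
  assumes "open S" "P f0"
    and cont: "\<And>f. P f \<Longrightarrow> continuous_on S f"
    and der: "\<And>f d. P f \<Longrightarrow> d \<in> Basis \<Longrightarrow> \<exists>g0 (I :: 'i set) F. finite I \<and> P g0 \<and> (\<forall>i\<in>I. P (F i))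
                  \<and> has_partial S f d (\<lambda>x. g0 x + (\<Sum>i\<in>I. F i x))"
  shows "smooth_on S f0"
proof -
  have "\<forall>f. P f \<longrightarrow> partials_continuous S n f" for n
  proof (induction n)
    case 0 then show ?case using cont by (simp add: partials_continuous_0_iff)
  next
    case (Suc n)
    show ?case
    proof (intro allI impI partials_continuous_SucI)
      fix f and d :: 'a assume "P f" "d \<in> Basis"
      then obtain g0 and I :: "'i set" and F where *: "finite I" "P g0" "\<forall>i\<in>I. P (F i)"
        "has_partial S f d (\<lambda>x. g0 x + (\<Sum>i\<in>I. F i x))" using der by metis
      have a: "partials_continuous S n g0" using *(2) Suc.IH by simp
      have "\<And>i. i \<in> I \<Longrightarrow> partials_continuous S n (F i)" using *(3) Suc.IH by simp
      then have b: "partials_continuous S n (\<lambda>x. \<Sum>i\<in>I. F i x)" by (rule partials_continuous_sum[OF *(1)])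
      have "partials_continuous S n (\<lambda>x. g0 x + (\<Sum>i\<in>I. F i x))" using partials_continuous_add[OF a b] .
      then show "\<exists>f1. has_partial S f d f1 \<and> partials_continuous S n f1" using *(4) by blast
    qed
  qed
  then show ?thesis using assms(1,2) by (simp add: smooth_on_iff_partials_continuous)
qed

lemma smooth_on_add:
  assumes "smooth_on S f" "smooth_on S g"
  shows "smooth_on S (\<lambda>x. f x + g x)"
  using assms unfolding smooth_on_iff_partials_continuous using partials_continuous_add by blast

lemma has_partial_linear: "bounded_linear L \<Longrightarrow> has_partial S f d f1 \<Longrightarrow> has_partial S (\<lambda>x. L (f x)) d (\<lambda>x. L (f1 x))"
  unfolding has_partial_def using bounded_linear.has_vector_derivative by blast

lemma iter_partial_linear: "bounded_linear L \<Longrightarrow> iter_partial S f ds g \<Longrightarrow> iter_partial S (\<lambda>x. L (f x)) ds (\<lambda>x. L (g x))"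
proof (induction ds arbitrary: g)
  case Nil then show ?case by (simp add: iter_partial_Nil_iff)
next
  case (Cons d ds) then show ?case by (metis iter_partial_Cons_iff has_partial_linear)
qed

lemma smooth_on_compose_linear:
  fixes f :: "'a::euclidean_space \<Rightarrow> 'b::real_normed_vector" and L :: "'b \<Rightarrow> 'c::real_normed_vector"
  assumes "bounded_linear L" "smooth_on S f"
  shows "smooth_on S (\<lambda>x. L (f x))"
  unfolding smooth_on_def
proof (intro conjI allI impI)
  show "open S" using assms(2) by (simp add: smooth_on_def)
  fix ds :: "'a list" assume "set ds \<subseteq> Basis"
  then obtain G where G: "iter_partial S f ds G" "continuous_on S G"
    using assms unfolding smooth_on_def by blast
  have "continuous_on S (\<lambda>x. L (G x))"
    using G(2) assms(1) by (simp add: bounded_linear.continuous_on)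
  then show "\<exists>g. iter_partial S (\<lambda>x. L (f x)) ds g \<and> continuous_on S g"
    using iter_partial_linear[OF assms(1) G(1)] by blast
qed

lemma smooth_on_const:
  assumes "open S"
  shows "smooth_on S (\<lambda>x. c)"
proof (rule smooth_on_coinduct[where P="\<lambda>f. \<exists>c. f = (\<lambda>x. c)"])
  fix f :: "'a \<Rightarrow> 'b" and d :: 'a assume "\<exists>c. f = (\<lambda>x. c)"
  then show "\<exists>g0 (I::unit set) F. finite I \<and> (\<exists>c. g0 = (\<lambda>x. c)) \<and> (\<forall>i\<in>I. \<exists>c. F i = (\<lambda>x. c)) \<and>
      has_partial S f d (\<lambda>x. g0 x + (\<Sum>i\<in>I. F i x))"
    by (intro exI[of _ "\<lambda>x. 0"] exI[of _ "{}"]) (auto simp: has_partial_def)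
qed (use assms in auto)

lemma smooth_on_linear:
  assumes "open S" "bounded_linear L"
  shows "smooth_on S L"
proof (rule smooth_onI[OF assms(1)])
  show "continuous_on S L" using assms(2) linear_continuous_on by blast
  fix d :: 'a
  have "has_partial S L d (\<lambda>x. L d)"
    unfolding has_partial_def
  proof
    fix x
    have "((\<lambda>t. L x + t *\<^sub>R L d) has_vector_derivative L d) (at 0)"
      by (auto intro!: derivative_eq_intros)
    then show "((\<lambda>t. L (x + t *\<^sub>R d)) has_vector_derivative L d) (at 0)"
      using assms(2) by (simp add: linear_add linear_scale bounded_linear.linear)
  qed
  then show "\<exists>f1. has_partial S L d f1 \<and> smooth_on S f1" using smooth_on_const[OF assms(1)] by blast
qed


lemma has_partial_at_shift:
  assumes "has_partial S f d f1" "y + r *\<^sub>R d \<in> S"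
  shows "((\<lambda>t. f (y + t *\<^sub>R d)) has_vector_derivative f1 (y + r *\<^sub>R d)) (at r)"
proof -
  have A: "((\<lambda>t. f ((y + r *\<^sub>R d) + t *\<^sub>R d)) has_vector_derivative f1 (y + r *\<^sub>R d)) (at 0)"
    using assms unfolding has_partial_def by blast
  have B: "((\<lambda>t. t - r) has_vector_derivative 1) (at r)"
    by (auto intro!: derivative_eq_intros)
  have "((\<lambda>t. f ((y + r *\<^sub>R d) + t *\<^sub>R d)) \<circ> (\<lambda>t. t - r) has_vector_derivative 1 *\<^sub>R f1 (y + r *\<^sub>R d)) (at r)"
    by (rule vector_diff_chain_at[OF B]) (use A in simp)
  moreover have "((\<lambda>t. f ((y + r *\<^sub>R d) + t *\<^sub>R d)) \<circ> (\<lambda>t. t - r)) = (\<lambda>t. f (y + t *\<^sub>R d))"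
    by (rule ext) (simp add: algebra_simps)
  ultimately show ?thesis by simp
qed

lemma partial_increment_estimate:
  assumes D: "has_partial S f b D" and b: "norm b = 1"
    and near: "\<And>z. norm (z - x) < \<delta> \<Longrightarrow> z \<in> S \<and> norm (D z - D x) \<le> e"
    and yc: "norm (y - x) + \<bar>c\<bar> < \<delta>"
  shows "norm (f (y + c *\<^sub>R b) - f y - c *\<^sub>R D x) \<le> 3 * e * \<bar>c\<bar>"
proof -
  have inseg: "norm (y + r *\<^sub>R b - x) < \<delta>" if "r \<in> closed_segment 0 c" for r
  proof -
    have "\<bar>r\<bar> \<le> \<bar>c\<bar>" using that by (auto simp: closed_segment_eq_real_ivl split: if_splits)
    have "norm (y + r *\<^sub>R b - x) \<le> norm (y - x) + norm (r *\<^sub>R b)"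
      using norm_triangle_ineq[of "y - x" "r *\<^sub>R b"] by (simp add: algebra_simps)
    also have "\<dots> \<le> norm (y - x) + \<bar>c\<bar>" using \<open>\<bar>r\<bar> \<le> \<bar>c\<bar>\<close> b by simp
    finally show ?thesis using yc by simp
  qed
  have der: "((\<lambda>r. f (y + r *\<^sub>R b)) has_vector_derivative D (y + r *\<^sub>R b)) (at r within closed_segment 0 c)"
    if "r \<in> closed_segment 0 c" for r
    using has_partial_at_shift[OF D] near[OF inseg[OF that]] has_vector_derivative_at_within by blast
  have bnd: "norm (D (y + r *\<^sub>R b) - D (y + 0 *\<^sub>R b)) \<le> 2 * e" if "r \<in> closed_segment 0 c" for r
    using norm_triangle_ineq4[of "D (y + r *\<^sub>R b) - D x" "D (y + 0 *\<^sub>R b) - D x"]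
      near[OF inseg[OF that]] near[OF inseg[of 0]] by simp
  have "norm (f (y + c *\<^sub>R b) - f (y + 0 *\<^sub>R b) - (c - 0) *\<^sub>R D (y + 0 *\<^sub>R b)) \<le> norm (c - 0) * (2 * e)"
    by (rule vector_differentiable_bound_linearization[where S="closed_segment 0 c"]) (use der bnd in auto)
  then have A: "norm (f (y + c *\<^sub>R b) - f y - c *\<^sub>R D y) \<le> \<bar>c\<bar> * (2 * e)" by simp
  have "norm (y - x) < \<delta>" using yc by linarith
  then have B: "norm (c *\<^sub>R D y - c *\<^sub>R D x) \<le> \<bar>c\<bar> * e"
    using near by (simp add: scaleR_diff_right[symmetric] mult_left_mono)
  have "norm (f (y + c *\<^sub>R b) - f y - c *\<^sub>R D x)
      \<le> norm (f (y + c *\<^sub>R b) - f y - c *\<^sub>R D y) + norm (c *\<^sub>R D y - c *\<^sub>R D x)"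
    by (rule order_trans[OF _ norm_triangle_ineq]) (simp add: algebra_simps)
  also have "\<dots> \<le> \<bar>c\<bar> * (2 * e) + \<bar>c\<bar> * e" using A B by (rule add_mono)
  finally show ?thesis by (simp add: algebra_simps)
qed

lemma increment_estimate_coordinatewise:
  assumes step: "\<And>b y c. b \<in> Basis \<Longrightarrow> norm (y - x) + \<bar>c\<bar> < \<delta> \<Longrightarrow>
      norm (f (y + c *\<^sub>R b) - f y - c *\<^sub>R D b x) \<le> E * \<bar>c\<bar>"
    and "distinct bs" "set bs \<subseteq> Basis" "norm (y - x) + (\<Sum>b\<in>set bs. \<bar>h \<bullet> b\<bar>) < \<delta>"
  shows "norm (f (y + (\<Sum>b\<in>set bs. (h \<bullet> b) *\<^sub>R b)) - f y - (\<Sum>b\<in>set bs. (h \<bullet> b) *\<^sub>R D b x))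
      \<le> E * (\<Sum>b\<in>set bs. \<bar>h \<bullet> b\<bar>)"
  using assms(2-)
proof (induction bs arbitrary: y)
  case Nil
  then show ?case by simp
next
  case (Cons b bs)
  have b: "b \<in> Basis" "b \<notin> set bs" using Cons.prems by auto
  define c where "c = h \<bullet> b"
  define y' where "y' = y + c *\<^sub>R b"
  have s3: "(\<Sum>b\<in>set (b#bs). \<bar>h \<bullet> b\<bar>) = \<bar>c\<bar> + (\<Sum>b\<in>set bs. \<bar>h \<bullet> b\<bar>)"
    using b by (simp add: c_def)
  have "norm (y' - x) \<le> norm (y - x) + \<bar>c\<bar>"
    using norm_triangle_ineq[of "y - x" "c *\<^sub>R b"] b(1) by (simp add: y'_def algebra_simps)
  then have "norm (y' - x) + (\<Sum>b\<in>set bs. \<bar>h \<bullet> b\<bar>) < \<delta>" using Cons.prems(3) s3 by linarith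
  with Cons.prems have IH: "norm (f (y' + (\<Sum>b\<in>set bs. (h \<bullet> b) *\<^sub>R b)) - f y' - (\<Sum>b\<in>set bs. (h \<bullet> b) *\<^sub>R D b x))
      \<le> E * (\<Sum>b\<in>set bs. \<bar>h \<bullet> b\<bar>)"
    by (intro Cons.IH) auto
  have "0 \<le> (\<Sum>b\<in>set bs. \<bar>h \<bullet> b\<bar>)" by (simp add: sum_nonneg)
  then have "norm (y - x) + \<bar>c\<bar> < \<delta>" using Cons.prems(3) s3 by linarith
  then have one: "norm (f y' - f y - c *\<^sub>R D b x) \<le> E * \<bar>c\<bar>"
    unfolding y'_def using b(1) step by blast
  have "f (y + (\<Sum>b\<in>set (b#bs). (h \<bullet> b) *\<^sub>R b)) - f y - (\<Sum>b\<in>set (b#bs). (h \<bullet> b) *\<^sub>R D b x)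
      = (f (y' + (\<Sum>b\<in>set bs. (h \<bullet> b) *\<^sub>R b)) - f y' - (\<Sum>b\<in>set bs. (h \<bullet> b) *\<^sub>R D b x))
        + (f y' - f y - c *\<^sub>R D b x)"
    using b by (simp add: y'_def c_def algebra_simps)
  then have "norm (f (y + (\<Sum>b\<in>set (b#bs). (h \<bullet> b) *\<^sub>R b)) - f y - (\<Sum>b\<in>set (b#bs). (h \<bullet> b) *\<^sub>R D b x))
      \<le> E * (\<Sum>b\<in>set bs. \<bar>h \<bullet> b\<bar>) + E * \<bar>c\<bar>"
    using IH one norm_triangle_ineq by (smt (verit))
  then show ?case using s3 by (simp add: algebra_simps)
qed

lemma has_derivative_continuous_partials:
  fixes f :: "'a::euclidean_space \<Rightarrow> 'b::real_normed_vector"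
  assumes S: "open S" and D: "\<And>b. b \<in> Basis \<Longrightarrow> has_partial S f b (D b)"
    and cD: "\<And>b. b \<in> Basis \<Longrightarrow> continuous_on S (D b)" and x: "x \<in> S"
  shows "(f has_derivative (\<lambda>v. \<Sum>b\<in>Basis. (v \<bullet> b) *\<^sub>R D b x)) (at x)"
  unfolding has_derivative_at_alt
proof (intro conjI allI impI)
  show "bounded_linear (\<lambda>v. \<Sum>b\<in>Basis. (v \<bullet> b) *\<^sub>R D b x)"
    by (intro bounded_linear_sum bounded_linear_compose[OF bounded_linear_scaleR_left bounded_linear_inner_left])
  fix e :: real assume e: "e > 0"
  define e' where "e' = e / (3 * real DIM('a))"
  have e': "e' > 0" using e by (simp add: e'_def)
  define \<psi> where "\<psi> z = (\<Sum>b\<in>Basis. norm (D b z - D b x))" for z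
  have "continuous_on S \<psi>" unfolding \<psi>_def
    by (intro continuous_on_sum continuous_on_norm continuous_on_diff cD continuous_on_const)
  then obtain d1 where d1: "d1 > 0" "\<And>z. z \<in> S \<Longrightarrow> dist z x < d1 \<Longrightarrow> dist (\<psi> z) (\<psi> x) < e'"
    using x e' unfolding continuous_on_iff by metis
  obtain d2 where d2: "d2 > 0" "ball x d2 \<subseteq> S" using S x openE by blast
  define \<delta> where "\<delta> = min d1 d2"
  have \<delta>: "\<delta> > 0" using d1 d2 by (simp add: \<delta>_def)
  have near: "z \<in> S \<and> norm (D b z - D b x) \<le> e'" if "norm (z - x) < \<delta>" "b \<in> Basis" for z b
  proof -
    have z: "z \<in> S" using that d2 by (auto simp: \<delta>_def dist_norm norm_minus_commute)
    then have "\<psi> z < e'" using d1(2)[OF z] that(1) by (simp add: \<delta>_def dist_norm \<psi>_def)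
    moreover have "norm (D b z - D b x) \<le> \<psi> z"
      unfolding \<psi>_def by (rule member_le_sum) (use that in auto)
    ultimately show ?thesis using z by simp
  qed
  obtain bs where bs: "set bs = (Basis :: 'a set)" "distinct bs"
    using finite_distinct_list[OF finite_Basis] by blast
  show "\<exists>d>0. \<forall>y. norm (y - x) < d \<longrightarrow>
     norm (f y - f x - (\<Sum>b\<in>Basis. ((y - x) \<bullet> b) *\<^sub>R D b x)) \<le> e * norm (y - x)"
  proof (intro exI[of _ "\<delta> / real DIM('a)"] conjI allI impI)
    show "\<delta> / real DIM('a) > 0" using \<delta> by simp
    fix y assume y: "norm (y - x) < \<delta> / real DIM('a)"
    define h where "h = y - x"
    have sumle: "(\<Sum>b\<in>Basis. \<bar>h \<bullet> b\<bar>) \<le> real DIM('a) * norm h"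
      using sum_mono[of Basis "\<lambda>b. \<bar>h \<bullet> b\<bar>" "\<lambda>_. norm h"] by (simp add: Basis_le_norm)
    have "real DIM('a) * norm h < \<delta>" using y by (simp add: h_def less_divide_eq mult.commute)
    then have "norm (x - x) + (\<Sum>b\<in>set bs. \<bar>h \<bullet> b\<bar>) < \<delta>" using sumle bs(1) by simp
    from increment_estimate_coordinatewise[OF _ bs(2) _ this, where f=f and E="3 * e'" and D=D]
    have "norm (f y - f x - (\<Sum>b\<in>Basis. ((y - x) \<bullet> b) *\<^sub>R D b x)) \<le> 3 * e' * (\<Sum>b\<in>Basis. \<bar>h \<bullet> b\<bar>)"
      using partial_increment_estimate[OF D _ near] bs(1) by (simp add: euclidean_representation h_def)
    also have "\<dots> \<le> 3 * e' * (real DIM('a) * norm h)"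
      using sumle e' by (intro mult_left_mono) auto
    also have "\<dots> = e * norm (y - x)" by (simp add: e'_def h_def)
    finally show "norm (f y - f x - (\<Sum>b\<in>Basis. ((y - x) \<bullet> b) *\<^sub>R D b x)) \<le> e * norm (y - x)" .
  qed
qed

lemma has_partial_scaleR:
  fixes c :: "'a::euclidean_space \<Rightarrow> real" and g :: "'a \<Rightarrow> 'b::real_normed_vector"
  assumes "has_partial S c d c1" "has_partial S g d g1"
  shows "has_partial S (\<lambda>x. c x *\<^sub>R g x) d (\<lambda>x. c1 x *\<^sub>R g x + c x *\<^sub>R g1 x)"
  unfolding has_partial_def
proof
  fix x assume x: "x \<in> S"
  have "((\<lambda>t. c (x + t *\<^sub>R d)) has_real_derivative c1 x) (at 0)"
    using assms(1) x unfolding has_partial_def has_real_derivative_iff_has_vector_derivative by blast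
  moreover have "((\<lambda>t. g (x + t *\<^sub>R d)) has_vector_derivative g1 x) (at 0)"
    using assms(2) x unfolding has_partial_def by blast
  ultimately have "((\<lambda>t. c (x + t *\<^sub>R d) *\<^sub>R g (x + t *\<^sub>R d)) has_vector_derivative
      c (x + 0 *\<^sub>R d) *\<^sub>R g1 x + c1 x *\<^sub>R g (x + 0 *\<^sub>R d)) (at 0)"
    by (rule has_vector_derivative_scaleR)
  then show "((\<lambda>t. c (x + t *\<^sub>R d) *\<^sub>R g (x + t *\<^sub>R d)) has_vector_derivative
      c1 x *\<^sub>R g x + c x *\<^sub>R g1 x) (at 0)"
    by (simp add: add.commute)
qed

lemma smooth_on_scaleR:
  fixes c :: "'a::euclidean_space \<Rightarrow> real" and g :: "'a \<Rightarrow> 'b::real_normed_vector"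
  assumes "smooth_on S c" "smooth_on S g"
  shows "smooth_on S (\<lambda>x. c x *\<^sub>R g x)"
proof -
  define Q where "Q f \<longleftrightarrow> (\<exists>c g. smooth_on S c \<and> smooth_on S g \<and> f = (\<lambda>x. c x *\<^sub>R g x))"
    for f :: "'a \<Rightarrow> 'b"
  show ?thesis
  proof (rule smooth_on_coinduct[where P=Q])
    show "open S" using assms(1) by (simp add: smooth_on_def)
    show "Q (\<lambda>x. c x *\<^sub>R g x)" unfolding Q_def using assms by blast
  next
    fix f assume "Q f"
    then obtain c g where cg: "smooth_on S c" "smooth_on S g" "f = (\<lambda>x. c x *\<^sub>R g x)"
      unfolding Q_def by blast
    show "continuous_on S f" unfolding cg(3)
      by (rule continuous_on_scaleR[OF smooth_on_imp_continuous_on[OF cg(1)] smooth_on_imp_continuous_on[OF cg(2)]])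
  next
    fix f and d :: 'a assume "Q f" and d: "d \<in> Basis"
    then obtain c g where cg: "smooth_on S c" "smooth_on S g" "f = (\<lambda>x. c x *\<^sub>R g x)"
      unfolding Q_def by blast
    obtain c1 where c1: "has_partial S c d c1" "smooth_on S c1" using smooth_on_has_partial[OF cg(1) d] by blast
    obtain g1 where g1: "has_partial S g d g1" "smooth_on S g1" using smooth_on_has_partial[OF cg(2) d] by blast
    have pdf: "has_partial S f d (\<lambda>x. c1 x *\<^sub>R g x + (\<Sum>i\<in>{()}. c x *\<^sub>R g1 x))"
      using has_partial_scaleR[OF c1(1) g1(1)] by (simp add: cg(3))
    have q1: "Q (\<lambda>x. c1 x *\<^sub>R g x)" unfolding Q_def using c1(2) cg(2) by blast
    have q2: "\<forall>i\<in>{()}. Q ((\<lambda>_ x. c x *\<^sub>R g1 x) i)" unfolding Q_def using cg(1) g1(2) by blast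
    show "\<exists>g0 (I::unit set) F. finite I \<and> Q g0 \<and> (\<forall>i\<in>I. Q (F i)) \<and> has_partial S f d (\<lambda>x. g0 x + (\<Sum>i\<in>I. F i x))"
      using q1 q2 pdf by (intro exI[of _ "\<lambda>x. c1 x *\<^sub>R g x"] exI[of _ "{()}"] exI[of _ "\<lambda>_ x. c x *\<^sub>R g1 x"]) simp
  qed
qed

lemma smooth_on_mult:
  fixes c g :: "'a::euclidean_space \<Rightarrow> real"
  assumes "smooth_on S c" "smooth_on S g"
  shows "smooth_on S (\<lambda>x. c x * g x)"
  using smooth_on_scaleR[OF assms] by simp

lemma has_partial_compose:
  fixes G :: "'c::euclidean_space \<Rightarrow> 'b::real_normed_vector" and \<Phi> :: "'a::euclidean_space \<Rightarrow> 'c"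
  assumes S: "open S" and pG: "\<And>b. b \<in> Basis \<Longrightarrow> has_partial S G b (DG b)"
    and cG: "\<And>b. b \<in> Basis \<Longrightarrow> continuous_on S (DG b)"
    and pP: "has_partial T \<Phi> d DP" and img: "\<And>x. x \<in> T \<Longrightarrow> \<Phi> x \<in> S"
  shows "has_partial T (\<lambda>x. G (\<Phi> x)) d (\<lambda>x. \<Sum>b\<in>Basis. (DP x \<bullet> b) *\<^sub>R DG b (\<Phi> x))"
  unfolding has_partial_def
proof
  fix x assume x: "x \<in> T"
  have h1: "((\<lambda>t. \<Phi> (x + t *\<^sub>R d)) has_derivative (\<lambda>s. s *\<^sub>R DP x)) (at 0)"
    using pP x unfolding has_partial_def has_vector_derivative_def by blast
  have h2: "(G has_derivative (\<lambda>v. \<Sum>b\<in>Basis. (v \<bullet> b) *\<^sub>R DG b (\<Phi> x))) (at (\<Phi> (x + 0 *\<^sub>R d)))"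
    using has_derivative_continuous_partials[OF S pG cG img[OF x]] by simp
  have "((\<lambda>t. G (\<Phi> (x + t *\<^sub>R d))) has_derivative (\<lambda>s. \<Sum>b\<in>Basis. ((s *\<^sub>R DP x) \<bullet> b) *\<^sub>R DG b (\<Phi> x))) (at 0)"
    using has_derivative_compose[OF h1 h2] by simp
  moreover have "(\<lambda>s. \<Sum>b\<in>Basis. ((s *\<^sub>R DP x) \<bullet> b) *\<^sub>R DG b (\<Phi> x))
      = (\<lambda>s. s *\<^sub>R (\<Sum>b\<in>Basis. (DP x \<bullet> b) *\<^sub>R DG b (\<Phi> x)))"
    by (rule ext) (simp add: scaleR_sum_right)
  ultimately show "((\<lambda>t. G (\<Phi> (x + t *\<^sub>R d))) has_vector_derivative (\<Sum>b\<in>Basis. (DP x \<bullet> b) *\<^sub>R DG b (\<Phi> x))) (at 0)"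
    unfolding has_vector_derivative_def by simp
qed

lemma smooth_on_compose:
  fixes G :: "'c::euclidean_space \<Rightarrow> 'b::real_normed_vector" and \<Phi> :: "'a::euclidean_space \<Rightarrow> 'c"
  assumes G: "smooth_on S G" and P: "smooth_on T \<Phi>" and img: "\<And>x. x \<in> T \<Longrightarrow> \<Phi> x \<in> S"
  shows "smooth_on T (\<lambda>x. G (\<Phi> x))"
proof -
  have S: "open S" and T: "open T" using G P by (simp_all add: smooth_on_def)
  define Q where "Q f \<longleftrightarrow> (\<exists>c G'. smooth_on T c \<and> smooth_on S G' \<and> f = (\<lambda>x. c x *\<^sub>R G' (\<Phi> x)))"
    for f :: "'a \<Rightarrow> 'b"
  have cP: "continuous_on T \<Phi>" using smooth_on_imp_continuous_on[OF P] .
  have "smooth_on T (\<lambda>x. (\<lambda>_. 1::real) x *\<^sub>R G (\<Phi> x))"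
  proof (rule smooth_on_coinduct[where P=Q])
    show "open T" by (rule T)
    show "Q (\<lambda>x. (\<lambda>_. 1::real) x *\<^sub>R G (\<Phi> x))" unfolding Q_def using smooth_on_const[OF T] G by blast
  next
    fix f assume "Q f"
    then obtain c G' where cg: "smooth_on T c" "smooth_on S G'" "f = (\<lambda>x. c x *\<^sub>R G' (\<Phi> x))"
      unfolding Q_def by blast
    have "continuous_on T (\<lambda>x. G' (\<Phi> x))"
      by (rule continuous_on_compose2[OF smooth_on_imp_continuous_on[OF cg(2)] cP]) (use img in blast)
    then show "continuous_on T f" unfolding cg(3)
      by (rule continuous_on_scaleR[OF smooth_on_imp_continuous_on[OF cg(1)]])
  next
    fix f and d :: 'a assume "Q f" and d: "d \<in> Basis"
    then obtain c G' where cg: "smooth_on T c" "smooth_on S G'" "f = (\<lambda>x. c x *\<^sub>R G' (\<Phi> x))"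
      unfolding Q_def by blast
    obtain c1 where c1: "has_partial T c d c1" "smooth_on T c1" using smooth_on_has_partial[OF cg(1) d] by blast
    obtain DP where DP: "has_partial T \<Phi> d DP" "smooth_on T DP" using smooth_on_has_partial[OF P d] by blast
    have "\<forall>b\<in>Basis. \<exists>g. has_partial S G' b g \<and> smooth_on S g" using smooth_on_has_partial[OF cg(2)] by blast
    then obtain DG where DG: "\<And>b. b \<in> Basis \<Longrightarrow> has_partial S G' b (DG b) \<and> smooth_on S (DG b)"
      by metis
    have comp: "has_partial T (\<lambda>x. G' (\<Phi> x)) d (\<lambda>x. \<Sum>b\<in>Basis. (DP x \<bullet> b) *\<^sub>R DG b (\<Phi> x))"
      by (rule has_partial_compose[OF S]) (use DG DP img smooth_on_imp_continuous_on in auto)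
    have pdf: "has_partial T f d (\<lambda>x. c1 x *\<^sub>R G' (\<Phi> x) + (\<Sum>b\<in>Basis. (c x * (DP x \<bullet> b)) *\<^sub>R DG b (\<Phi> x)))"
      using has_partial_scaleR[OF c1(1) comp] by (simp add: cg(3) scaleR_sum_right)
    have q1: "Q (\<lambda>x. c1 x *\<^sub>R G' (\<Phi> x))" unfolding Q_def using c1(2) cg(2) by blast
    have q2: "\<forall>b\<in>Basis. Q ((\<lambda>b x. (c x * (DP x \<bullet> b)) *\<^sub>R DG b (\<Phi> x)) b)"
    proof
      fix b :: 'c assume b: "b \<in> Basis"
      have "smooth_on T (\<lambda>x. DP x \<bullet> b)"
        by (rule smooth_on_compose_linear[OF bounded_linear_inner_left DP(2)])
      then have "smooth_on T (\<lambda>x. c x * (DP x \<bullet> b))" by (rule smooth_on_mult[OF cg(1)])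
      then show "Q ((\<lambda>b x. (c x * (DP x \<bullet> b)) *\<^sub>R DG b (\<Phi> x)) b)"
        unfolding Q_def using DG[OF b] by blast
    qed
    show "\<exists>g0 (I::'c set) F. finite I \<and> Q g0 \<and> (\<forall>i\<in>I. Q (F i)) \<and> has_partial T f d (\<lambda>x. g0 x + (\<Sum>i\<in>I. F i x))"
      using q1 q2 pdf
      by (intro exI[of _ "\<lambda>x. c1 x *\<^sub>R G' (\<Phi> x)"] exI[of _ "Basis::'c set"]
          exI[of _ "\<lambda>b x. (c x * (DP x \<bullet> b)) *\<^sub>R DG b (\<Phi> x)"]) simp
  qed
  then show ?thesis by simp
qed

lemma continuous_on_vanishing_outside:
  assumes U: "open U" "continuous_on U f" and C: "closed C" "C \<subseteq> U"
    and van: "\<And>x. x \<notin> C \<Longrightarrow> f x = 0"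
  shows "continuous_on UNIV f"
proof -
  have "continuous_on (- C) f"
    by (rule continuous_on_cong[THEN iffD1, OF refl _ continuous_on_const[of _ 0]]) (use van in auto)
  then have "continuous_on (U \<union> - C) f"
    using continuous_on_open_Un[OF U(1) _ U(2)] C(1) by (simp add: open_Compl)
  moreover have "U \<union> - C = UNIV" using C(2) by blast
  ultimately show ?thesis by simp
qed

lemma has_partial_extend_zero:
  fixes F :: "'a::euclidean_space \<Rightarrow> 'b::real_normed_vector"
  assumes S: "open S" and C: "closed C" "C \<subseteq> S" and van: "\<And>x. x \<in> S \<Longrightarrow> x \<notin> C \<Longrightarrow> F x = 0"
    and F1: "has_partial S F d F1"
  shows "has_partial UNIV (\<lambda>x. if x \<in> S then F x else 0) d (\<lambda>x. if x \<in> S then F1 x else 0)"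
    and "\<And>x. x \<in> S \<Longrightarrow> x \<notin> C \<Longrightarrow> F1 x = 0"
proof -
  have oC: "open (- C)" using C(1) by (simp add: open_Compl)
  have zero_near: "((\<lambda>t. G (x + t *\<^sub>R d)) has_vector_derivative 0) (at 0)"
    if "x \<notin> C" "\<And>y. y \<in> T - C \<Longrightarrow> G y = 0" "open T" "x \<in> T" for G :: "'a \<Rightarrow> 'b" and T x
    by (rule has_vector_derivative_transform_within_open[OF has_vector_derivative_const[of 0]
          open_line_preimage[where S="T \<inter> - C"]])
       (use that oC in auto)
  show "F1 x = 0" if "x \<in> S" "x \<notin> C" for x
  proof -
    have "((\<lambda>t. F (x + t *\<^sub>R d)) has_vector_derivative 0) (at 0)"
      by (rule zero_near[of x S F]) (use that van S in auto)
    moreover have "((\<lambda>t. F (x + t *\<^sub>R d)) has_vector_derivative F1 x) (at 0)"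
      using F1 that(1) unfolding has_partial_def by blast
    ultimately show ?thesis using vector_derivative_unique_at by metis
  qed
  show "has_partial UNIV (\<lambda>x. if x \<in> S then F x else 0) d (\<lambda>x. if x \<in> S then F1 x else 0)"
    unfolding has_partial_def
  proof
    fix x :: 'a
    show "((\<lambda>t. if x + t *\<^sub>R d \<in> S then F (x + t *\<^sub>R d) else 0) has_vector_derivative
        (if x \<in> S then F1 x else 0)) (at 0)"
    proof (cases "x \<in> S")
      case True
      have "((\<lambda>t. F (x + t *\<^sub>R d)) has_vector_derivative F1 x) (at 0)"
        using F1 True unfolding has_partial_def by blast
      then have "((\<lambda>t. if x + t *\<^sub>R d \<in> S then F (x + t *\<^sub>R d) else 0) has_vector_derivative F1 x) (at 0)"
        by (rule has_vector_derivative_transform_within_open[OF _ open_line_preimage[OF S]]) (use True in auto)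
      then show ?thesis using True by simp
    next
      case False
      then have "x \<notin> C" using C(2) by blast
      have "((\<lambda>t. (\<lambda>y. if y \<in> S then F y else 0) (x + t *\<^sub>R d)) has_vector_derivative 0) (at 0)"
        by (rule zero_near[OF \<open>x \<notin> C\<close> _ open_UNIV]) (use van in auto)
      then show ?thesis using False by simp
    qed
  qed
qed

lemma smooth_on_extend_zero:
  fixes F :: "'a::euclidean_space \<Rightarrow> 'b::real_normed_vector"
  assumes F: "smooth_on S F" and C: "closed C" "C \<subseteq> S" and van: "\<And>x. x \<in> S \<Longrightarrow> x \<notin> C \<Longrightarrow> F x = 0"
  shows "smooth_on UNIV (\<lambda>x. if x \<in> S then F x else 0)"
proof -
  have S: "open S" using F by (simp add: smooth_on_def)
  define Q where "Q f \<longleftrightarrow> (\<exists>F. smooth_on S F \<and> (\<forall>x\<in>S. x \<notin> C \<longrightarrow> F x = 0) \<and> f = (\<lambda>x. if x \<in> S then F x else 0))"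
    for f :: "'a \<Rightarrow> 'b"
  show ?thesis
  proof (rule smooth_on_coinduct[where P=Q])
    show "open (UNIV::'a set)" by simp
    show "Q (\<lambda>x. if x \<in> S then F x else 0)" unfolding Q_def using F van by blast
  next
    fix f assume "Q f"
    then obtain F where FF: "smooth_on S F" "\<forall>x\<in>S. x \<notin> C \<longrightarrow> F x = 0" "f = (\<lambda>x. if x \<in> S then F x else 0)"
      unfolding Q_def by blast
    have "continuous_on S f"
      using smooth_on_imp_continuous_on[OF FF(1)] by (rule continuous_on_cong[THEN iffD1, rotated 2]) (simp_all add: FF(3))
    then show "continuous_on UNIV f"
      by (rule continuous_on_vanishing_outside[OF S _ C]) (use FF in auto)
  next
    fix f and d :: 'a assume "Q f" and d: "d \<in> Basis"
    then obtain F where FF: "smooth_on S F" "\<forall>x\<in>S. x \<notin> C \<longrightarrow> F x = 0" "f = (\<lambda>x. if x \<in> S then F x else 0)"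
      unfolding Q_def by blast
    obtain F1 where F1: "has_partial S F d F1" "smooth_on S F1" using smooth_on_has_partial[OF FF(1) d] by blast
    have van_F: "\<And>x. x \<in> S \<Longrightarrow> x \<notin> C \<Longrightarrow> F x = 0" using FF(2) by blast
    note ext = has_partial_extend_zero[OF S C van_F F1(1)]
    have "Q (\<lambda>x. if x \<in> S then F1 x else 0)" unfolding Q_def using F1(2) ext(2) by blast
    moreover have "has_partial UNIV f d (\<lambda>x. (if x \<in> S then F1 x else 0) + (\<Sum>i\<in>{}. (\<lambda>_ x. 0::'b) i x))"
      using ext(1) by (simp add: FF(3))
    ultimately show "\<exists>g0 (I::unit set) G. finite I \<and> Q g0 \<and> (\<forall>i\<in>I. Q (G i)) \<and>
        has_partial UNIV f d (\<lambda>x. g0 x + (\<Sum>i\<in>I. G i x))"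
      by (intro exI[of _ "\<lambda>x. if x \<in> S then F1 x else 0"] exI[of _ "{}::unit set"] exI[of _ "\<lambda>_ x. 0::'b"]) simp
  qed
qed

lemma has_real_derivative_inverse_power:
  assumes "x \<noteq> (0::real)"
  shows "((\<lambda>t. c * inverse (x + t) ^ m) has_real_derivative (- (c * m) * inverse x ^ Suc m)) (at 0)"
proof -
  have h1: "((\<lambda>t. x + t) has_real_derivative 1) (at 0)"
    using DERIV_add[OF DERIV_const[of x] DERIV_ident] by simp
  have h2: "((\<lambda>t. inverse (x + t)) has_real_derivative - (1 * inverse ((x + 0) ^ Suc (Suc 0)))) (at 0)"
    using DERIV_inverse_fun[OF h1] assms by simp
  have h3: "((\<lambda>t. inverse (x + t) ^ m) has_real_derivative
      of_nat m * (- (1 * inverse ((x + 0) ^ Suc (Suc 0))) * inverse (x + 0) ^ (m - Suc 0))) (at 0)"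
    by (rule DERIV_power[OF h2])
  have h4: "((\<lambda>t. c * inverse (x + t) ^ m) has_real_derivative
      c * (of_nat m * (- (1 * inverse ((x + 0) ^ Suc (Suc 0))) * inverse (x + 0) ^ (m - Suc 0)))) (at 0)"
    by (rule DERIV_cmult[OF h3])
  have "c * (of_nat m * (- (1 * inverse ((x + 0) ^ Suc (Suc 0))) * inverse (x + 0) ^ (m - Suc 0)))
      = - (c * m) * inverse x ^ Suc m"
  proof (cases m)
    case 0 then show ?thesis by simp
  next
    case (Suc k)
    have "inverse (x ^ Suc (Suc 0)) * inverse x ^ k = inverse x ^ Suc (Suc k)"
      by (simp add: power_inverse[symmetric] field_simps)
    then show ?thesis using Suc by (simp add: algebra_simps)
  qed
  then show ?thesis using DERIV_cong[OF h4] by blast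
qed

lemma smooth_on_inverse_power: "smooth_on {x::real. x \<noteq> 0} (\<lambda>x. inverse x ^ m)"
proof -
  define S where "S = {x::real. x \<noteq> 0}"
  have S: "open S" unfolding S_def by (simp add: open_Collect_neq continuous_on_const continuous_on_id)
  define Q where "Q f \<longleftrightarrow> (\<exists>c m. f = (\<lambda>x::real. c * inverse x ^ m))" for f :: "real \<Rightarrow> real"
  have "smooth_on S (\<lambda>x. 1 * inverse x ^ m)"
  proof (rule smooth_on_coinduct[where P=Q])
    show "open S" by (rule S)
    show "Q (\<lambda>x. 1 * inverse x ^ m)" unfolding Q_def by blast
  next
    fix f assume "Q f"
    then obtain c m where f: "f = (\<lambda>x::real. c * inverse x ^ m)" unfolding Q_def by blast
    show "continuous_on S f" unfolding f S_def
      by (intro continuous_on_mult continuous_on_const continuous_on_power continuous_on_inverse continuous_on_id) auto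
  next
    fix f and d :: real assume "Q f" and d: "d \<in> Basis"
    then obtain c m where f: "f = (\<lambda>x::real. c * inverse x ^ m)" unfolding Q_def by blast
    have d1: "d = 1" using d by simp
    have pdf: "has_partial S f d (\<lambda>x. (- (c * m) * inverse x ^ Suc m) + (\<Sum>i\<in>{}. (\<lambda>_ x. 0::real) i x))"
      unfolding has_partial_def
    proof
      fix x assume "x \<in> S"
      then have "x \<noteq> 0" by (simp add: S_def)
      from has_real_derivative_inverse_power[OF this, of c m]
      show "((\<lambda>t. f (x + t *\<^sub>R d)) has_vector_derivative (- (c * m) * inverse x ^ Suc m) + (\<Sum>i\<in>{}. (\<lambda>_ x. 0::real) i x)) (at 0)"
        unfolding f d1 has_real_derivative_iff_has_vector_derivative by simp
    qed
    have q1: "Q (\<lambda>x. - (c * m) * inverse x ^ Suc m)" unfolding Q_def by blast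
    show "\<exists>g0 (I::unit set) G. finite I \<and> Q g0 \<and> (\<forall>i\<in>I. Q (G i)) \<and> has_partial S f d (\<lambda>x. g0 x + (\<Sum>i\<in>I. G i x))"
      using q1 pdf by (intro exI[of _ "\<lambda>x. - (c * m) * inverse x ^ Suc m"] exI[of _ "{}::unit set"] exI[of _ "\<lambda>_ x. 0::real"]) simp
  qed
  then show ?thesis by (simp add: S_def)
qed

lemma smooth_on_inverse_power_fst:
  assumes "open T" "\<And>z. z \<in> T \<Longrightarrow> fst z \<noteq> (0::real)"
  shows "smooth_on T (\<lambda>z::real \<times> 'b::euclidean_space. inverse (fst z) ^ m)"
  by (rule smooth_on_compose[OF smooth_on_inverse_power smooth_on_linear[OF assms(1) bounded_linear_fst]]) (use assms(2) in auto)

lemma smooth_on_inverse_power_snd: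
  assumes "open T" "\<And>z. z \<in> T \<Longrightarrow> snd z \<noteq> (0::real)"
  shows "smooth_on T (\<lambda>z::'b::euclidean_space \<times> real. inverse (snd z) ^ m)"
  by (rule smooth_on_compose[OF smooth_on_inverse_power smooth_on_linear[OF assms(1) bounded_linear_snd]]) (use assms(2) in auto)

section \<open>Integrals of continuous functions with compact support\<close>

lemma notin_tsupp_eq_0: "x \<notin> tsupp f \<Longrightarrow> f x = 0"
  unfolding tsupp_def using closure_subset[of "{x. f x \<noteq> 0}"] by auto

lemma tsupp_subset: "{x. f x \<noteq> 0} \<subseteq> C \<Longrightarrow> closed C \<Longrightarrow> tsupp f \<subseteq> C"
  unfolding tsupp_def by (rule closure_minimal)

lemma compact_tsupp:
  fixes f :: "'a::t2_space \<Rightarrow> 'b::zero"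
  assumes "{x. f x \<noteq> 0} \<subseteq> K" "compact K"
  shows "compact (tsupp f)"
proof -
  have "tsupp f \<subseteq> K" by (rule tsupp_subset[OF assms(1) compact_imp_closed[OF assms(2)]])
  then have "K \<inter> tsupp f = tsupp f" by blast
  with compact_Int_closed[OF assms(2), of "tsupp f"] show ?thesis by (simp add: tsupp_def)
qed

lemma continuous_on_compose_UNIV: "continuous_on UNIV \<phi> \<Longrightarrow> continuous_on S g \<Longrightarrow> continuous_on S (\<lambda>x. \<phi> (g x))"
  by (rule continuous_on_compose2[of UNIV \<phi> S g]) auto

lemma continuous_on_slice_right:
  assumes "continuous_on UNIV (\<lambda>z. F (fst z) (snd z))"
  shows "continuous_on UNIV (F x)"
  using continuous_on_compose_UNIV[OF assms, of UNIV "\<lambda>y. (x, y)"] by (simp add: continuous_on_Pair)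

lemma continuous_on_slice_left:
  assumes "continuous_on UNIV (\<lambda>z. F (fst z) (snd z))"
  shows "continuous_on UNIV (\<lambda>x. F x y)"
  using continuous_on_compose_UNIV[OF assms, of UNIV "\<lambda>x. (x, y)"] by (simp add: continuous_on_Pair)

lemma integrable_lborel_compact_support:
  fixes F :: "'e::euclidean_space \<Rightarrow> 'b::{banach, second_countable_topology}"
  assumes "continuous_on UNIV F" "compact K" "\<And>x. x \<notin> K \<Longrightarrow> F x = 0"
  shows "integrable lborel F"
proof -
  have "integrable lborel (\<lambda>x. indicat_real K x *\<^sub>R F x)"
    by (rule borel_integrable_compact[OF assms(2) continuous_on_subset[OF assms(1)]]) simp
  moreover have "(\<lambda>x. indicat_real K x *\<^sub>R F x) = F"
    by (rule ext) (use assms(3) in \<open>auto simp: indicator_def\<close>)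
  ultimately show ?thesis by simp
qed

lemma lborel_pair_integral_compact_support:
  fixes F :: "'x::euclidean_space \<Rightarrow> 'y::euclidean_space \<Rightarrow> 'b::{banach, second_countable_topology}"
  assumes "continuous_on UNIV (\<lambda>z. F (fst z) (snd z))" "compact K" "\<And>x y. (x, y) \<notin> K \<Longrightarrow> F x y = 0"
  shows "(\<integral>x. \<integral>y. F x y \<partial>lborel \<partial>lborel) = (\<integral>z. F (fst z) (snd z) \<partial>lborel)"
    and "(\<integral>y. \<integral>x. F x y \<partial>lborel \<partial>lborel) = (\<integral>z. F (fst z) (snd z) \<partial>lborel)"
proof -
  have "integrable lborel (\<lambda>z. F (fst z) (snd z))"
    by (rule integrable_lborel_compact_support[OF assms(1,2)]) (metis assms(3) prod.collapse)
  then have int: "integrable (lborel \<Otimes>\<^sub>M lborel) (\<lambda>(x, y). F x y)"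
    by (simp add: lborel_prod case_prod_beta')
  show "(\<integral>x. \<integral>y. F x y \<partial>lborel \<partial>lborel) = (\<integral>z. F (fst z) (snd z) \<partial>lborel)"
    using lborel_pair.integral_fst[OF int] by (simp add: lborel_prod case_prod_beta')
  show "(\<integral>y. \<integral>x. F x y \<partial>lborel \<partial>lborel) = (\<integral>z. F (fst z) (snd z) \<partial>lborel)"
    using lborel_pair.integral_snd[OF int] by (simp add: lborel_prod case_prod_beta')
qed

lemma continuous_AE_zero_imp_zero:
  fixes g :: "'e::euclidean_space \<Rightarrow> 'b::real_normed_vector"
  assumes g: "continuous_on UNIV g" and ae: "AE x in lborel. g x = 0"
  shows "g x = 0"
proof (rule ccontr)
  assume nz: "g x \<noteq> 0"
  have op: "open {x. g x \<noteq> 0}"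
    using open_Collect_neq[OF g continuous_on_const] by simp
  then obtain r where r: "r > 0" "ball x r \<subseteq> {x. g x \<noteq> 0}" using nz openE by blast
  have meas: "{x. g x \<noteq> 0} \<in> sets lborel" using op by simp
  have "emeasure lborel {x. g x \<noteq> 0} = 0"
    using AE_iff_measurable[OF meas, of "\<lambda>x. g x = 0"] ae by simp
  then have "emeasure lborel (ball x r) = 0"
    using emeasure_mono[OF r(2) meas] by simp
  moreover have "emeasure lborel (ball x r) > 0" using r(1) by (simp add: emeasure_ball unit_ball_vol_pos)
  ultimately show False by simp
qed

lemma lborel_integral_translate:
  fixes g :: "'e::euclidean_space \<Rightarrow> 'b::{banach, second_countable_topology}"
  assumes "g \<in> borel_measurable borel"
  shows "(\<integral>q. g (q + c) \<partial>lborel) = (\<integral>q. g q \<partial>lborel)"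
proof -
  have "(\<integral>q. g q \<partial>lborel) = (\<integral>q. g q \<partial>(distr lborel borel ((+) c)))"
    by (simp add: lborel_distr_plus)
  also have "\<dots> = (\<integral>q. g (c + q) \<partial>lborel)"
    by (rule integral_distr) (use assms in auto)
  finally show ?thesis by (simp add: add.commute)
qed

lemma continuous_on_parametric_integral:
  fixes F :: "'x::euclidean_space \<Rightarrow> 'e::euclidean_space \<Rightarrow> 'b::{banach, second_countable_topology}"
  assumes cF: "continuous_on UNIV (\<lambda>z. F (fst z) (snd z))" and K: "compact K"
    and van: "\<And>x y. y \<notin> K \<Longrightarrow> F x y = 0"
  shows "continuous_on UNIV (\<lambda>x. \<integral>y. F x y \<partial>lborel)"
  unfolding continuous_on_iff
proof (intro ballI allI impI)
  fix x0 :: 'x and e :: real assume "x0 \<in> UNIV" and e: "e > 0"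
  have int: "integrable lborel (F x)" for x
  proof (rule integrable_lborel_compact_support[OF _ K])
    have "continuous_on UNIV ((\<lambda>z. F (fst z) (snd z)) \<circ> (\<lambda>y. (x, y)))"
      by (rule continuous_on_compose[OF _ continuous_on_subset[OF cF]]) (auto intro!: continuous_intros)
    then show "continuous_on UNIV (F x)" by (simp add: o_def)
  qed (use van in auto)
  define m where "m = measure lborel K"
  have m: "m \<ge> 0" by (simp add: m_def)
  define e' where "e' = e / (m + 1)"
  have e': "e' > 0" using e m by (simp add: e'_def)
  have cpt: "compact (cball x0 1 \<times> K)" using K by (intro compact_Times) auto
  have "uniformly_continuous_on (cball x0 1 \<times> K) (\<lambda>z. F (fst z) (snd z))"
    by (rule compact_uniformly_continuous[OF continuous_on_subset[OF cF] cpt]) simp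
  then obtain d where d: "d > 0" "\<And>z z'. z \<in> cball x0 1 \<times> K \<Longrightarrow> z' \<in> cball x0 1 \<times> K \<Longrightarrow>
      dist z' z < d \<Longrightarrow> dist (F (fst z') (snd z')) (F (fst z) (snd z)) < e'"
    unfolding uniformly_continuous_on_def using e' by metis
  show "\<exists>d>0. \<forall>x'\<in>UNIV. dist x' x0 < d \<longrightarrow> dist (\<integral>y. F x' y \<partial>lborel) (\<integral>y. F x0 y \<partial>lborel) < e"
  proof (intro exI[of _ "min d 1"] conjI ballI impI)
    show "min d 1 > 0" using d by simp
    fix x assume "x \<in> UNIV" and dx: "dist x x0 < min d 1"
    have pt: "norm (F x y - F x0 y) \<le> e' * indicator K y" for y
    proof (cases "y \<in> K")
      case True
      have "x \<in> cball x0 1" "x0 \<in> cball x0 1" using dx by (auto simp: dist_commute)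
      moreover have "dist (x, y) (x0, y) < d" using dx by (simp add: dist_Pair_Pair)
      ultimately have "dist (F x y) (F x0 y) < e'"
        using d(2)[of "(x0, y)" "(x, y)"] True by simp
      then show ?thesis using True by (simp add: dist_norm)
    next
      case False then show ?thesis using van by simp
    qed
    have intK: "integrable lborel (\<lambda>y. e' * indicat_real K y)"
      using emeasure_compact_finite[OF K] by (intro integrable_mult_right integrable_real_indicator) (auto simp: K compact_imp_closed borel_closed)
    have "norm ((\<integral>y. F x y \<partial>lborel) - (\<integral>y. F x0 y \<partial>lborel)) = norm (\<integral>y. F x y - F x0 y \<partial>lborel)"
      using int by (simp add: integral_diff)
    also have "\<dots> \<le> (\<integral>y. e' * indicator K y \<partial>lborel)"
      by (rule Bochner_Integration.integral_norm_bound_integral[OF Bochner_Integration.integrable_diff[OF int int] intK]) (use pt in auto)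
    also have "\<dots> = e' * m" by (simp add: m_def)
    also have "\<dots> < e" using e m by (simp add: e'_def field_simps)
    finally show "dist (\<integral>y. F x y \<partial>lborel) (\<integral>y. F x0 y \<partial>lborel) < e" by (simp add: dist_norm)
  qed
qed

lemma continuous_reciprocal_pullback:
  fixes g :: "real \<Rightarrow> 'b::real_normed_vector"
  assumes cont: "continuous_on UNIV g" and c: "0 < c1" "c1 \<le> c2"
    and van: "\<And>s. s \<notin> {c1..c2} \<Longrightarrow> g s = 0"
  defines "G \<equiv> \<lambda>t. if t < 0 then (inverse t)\<^sup>2 *\<^sub>R g (- inverse t) else 0"
  shows "continuous_on UNIV G" and "\<And>t. t \<notin> {- inverse c1..- inverse c2} \<Longrightarrow> G t = 0"
proof -
  show G_van: "G t = 0" if "t \<notin> {- inverse c1..- inverse c2}" for t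
  proof (cases "t < 0")
    case True
    have "- inverse t \<notin> {c1..c2}"
    proof
      assume s: "- inverse t \<in> {c1..c2}"
      have "inverse (- inverse t) \<le> inverse c1" by (rule le_imp_inverse_le) (use s c in auto)
      moreover have "inverse c2 \<le> inverse (- inverse t)" by (rule le_imp_inverse_le) (use s c True in auto)
      ultimately show False using that by simp
    qed
    then show ?thesis using van True by (simp add: G_def)
  qed (simp add: G_def)
  have "continuous_on {t. t < 0} G"
  proof -
    have "continuous_on {t::real. t < 0} (\<lambda>t. (inverse t)\<^sup>2 *\<^sub>R g (- inverse t))"
      by (intro continuous_intros continuous_on_compose_UNIV[OF cont]) auto
    then show ?thesis by (rule continuous_on_cong[THEN iffD1, rotated 2]) (auto simp: G_def)
  qed
  moreover have "{- inverse c1..- inverse c2} \<subseteq> {t. t < 0}"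
    using c by (auto intro: order_le_less_trans[of _ "- inverse c2"])
  moreover have "open {t::real. t < 0}" using open_lessThan[of 0] by (simp add: lessThan_def)
  ultimately show "continuous_on UNIV G"
    using continuous_on_vanishing_outside[of "{t. t < 0}" G "{- inverse c1..- inverse c2}"] G_van by simp
qed

lemma lborel_integral_reciprocal_substitution:
  fixes g :: "real \<Rightarrow> complex"
  assumes cont: "continuous_on UNIV g" and c: "0 < c1" "c1 \<le> c2"
    and van: "\<And>s. s \<notin> {c1..c2} \<Longrightarrow> g s = 0"
  shows "(\<integral>s. g s \<partial>lborel) = (\<integral>t. (if t < 0 then (inverse t)\<^sup>2 *\<^sub>R g (- inverse t) else 0) \<partial>lborel)"
proof -
  define G where "G t = (if t < 0 then (inverse t)\<^sup>2 *\<^sub>R g (- inverse t) else 0)" for t :: real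
  have cG: "continuous_on UNIV G"
    using continuous_reciprocal_pullback(1)[OF cont c van] by (simp add: G_def)
  have G_van: "G t = 0" if "t \<notin> {- inverse c1..- inverse c2}" for t
    using continuous_reciprocal_pullback(2)[OF cont c van that] by (simp add: G_def)
  have der: "((\<lambda>s. - inverse s) has_real_derivative (inverse s)\<^sup>2) (at s within {c1..c2})"
    if "s \<in> {c1..c2}" for s
  proof -
    have "s \<noteq> 0" using that c by auto
    from DERIV_minus[OF DERIV_inverse[OF this]] show ?thesis by (simp add: power2_eq_square)
  qed
  have "((\<lambda>s. (inverse s)\<^sup>2 *\<^sub>R G (- inverse s)) has_integral integral {- inverse c1..- inverse c2} G) {c1..c2}"
  proof (rule has_integral_substitution[where c="- inverse c1" and d="- inverse c2"])
    show "- inverse c1 \<le> - inverse c2" using c by (simp add: le_imp_inverse_le)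
    show "(\<lambda>s. - inverse s) ` {c1..c2} \<subseteq> {- inverse c1..- inverse c2}"
      using c by (auto intro!: le_imp_inverse_le)
    show "continuous_on {- inverse c1..- inverse c2} G" by (rule continuous_on_subset[OF cG]) simp
  qed (use c der in auto)
  moreover have "(inverse s)\<^sup>2 *\<^sub>R G (- inverse s) = g s" if "s \<in> {c1..c2}" for s
  proof -
    have "s > 0" using that c by auto
    then have "inverse s * inverse s * (s * s) = 1" by (simp add: field_simps)
    then show ?thesis using \<open>s > 0\<close> by (simp add: G_def power2_eq_square)
  qed
  ultimately have "(g has_integral integral {- inverse c1..- inverse c2} G) {c1..c2}"
    using has_integral_cong[of "{c1..c2}" "\<lambda>s. (inverse s)\<^sup>2 *\<^sub>R G (- inverse s)" g] by simp
  then have "integral {c1..c2} g = integral {- inverse c1..- inverse c2} G" by (rule integral_unique)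
  moreover have "(\<lambda>x. if x \<in> {c1..c2} then g x else 0) = g" using van by force
  moreover have "(\<lambda>x. if x \<in> {- inverse c1..- inverse c2} then G x else 0) = G" using G_van by force
  ultimately have "integral UNIV g = integral UNIV G"
    using integral_restrict_UNIV[of "{c1..c2}" g] integral_restrict_UNIV[of "{- inverse c1..- inverse c2}" G]
    by simp
  moreover have "integrable lborel g"
    by (rule integrable_lborel_compact_support[OF cont compact_Icc[of c1 c2] van])
  moreover have "integrable lborel G"
    by (rule integrable_lborel_compact_support[OF cG compact_Icc[of "- inverse c1" "- inverse c2"] G_van])
  ultimately have "(\<integral>s. g s \<partial>lborel) = (\<integral>t. G t \<partial>lborel)" by (simp add: integral_lborel)
  then show ?thesis by (simp add: G_def)
qed

section \<open>Injectivity of the Fourier transform\<close>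

inductive trig_poly :: "('a::euclidean_space \<Rightarrow> real) \<Rightarrow> bool" where
  tcos: "trig_poly (\<lambda>p. c * cos (p \<bullet> w))"
| tsin: "trig_poly (\<lambda>p. c * sin (p \<bullet> w))"
| tadd: "trig_poly f \<Longrightarrow> trig_poly g \<Longrightarrow> trig_poly (\<lambda>p. f p + g p)"

lemma trig_poly_const: "trig_poly (\<lambda>p. c)"
  using tcos[of c 0] by simp

lemma continuous_on_trig_poly: "trig_poly f \<Longrightarrow> continuous_on UNIV f"
  by (induction rule: trig_poly.induct) (auto intro!: continuous_intros)

lemma trig_poly_mult_cos_sin:
  assumes "trig_poly f"
  shows "trig_poly (\<lambda>p. f p * (d * cos (p \<bullet> v)))" "trig_poly (\<lambda>p. f p * (d * sin (p \<bullet> v)))"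
  using assms
proof (induction rule: trig_poly.induct)
  case (tcos c w)
  {
    have eq: "(\<lambda>p. c * cos (p \<bullet> w) * (d * cos (p \<bullet> v))) =
        (\<lambda>p. (c * d / 2) * cos (p \<bullet> (w + v)) + (c * d / 2) * cos (p \<bullet> (w - v)))"
      by (rule ext) (simp add: inner_add_right inner_diff_right cos_add cos_diff algebra_simps)
    show "trig_poly (\<lambda>p. c * cos (p \<bullet> w) * (d * cos (p \<bullet> v)))" unfolding eq by (intro trig_poly.tadd trig_poly.tcos trig_poly.tsin)
  next
    have eq: "(\<lambda>p. c * cos (p \<bullet> w) * (d * sin (p \<bullet> v))) =
        (\<lambda>p. (c * d / 2) * sin (p \<bullet> (w + v)) + (- (c * d / 2)) * sin (p \<bullet> (w - v)))"
      by (rule ext) (simp add: inner_add_right inner_diff_right sin_add sin_diff algebra_simps)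
    show "trig_poly (\<lambda>p. c * cos (p \<bullet> w) * (d * sin (p \<bullet> v)))" unfolding eq by (intro trig_poly.tadd trig_poly.tcos trig_poly.tsin)
  }
next
  case (tsin c w)
  {
    have eq: "(\<lambda>p. c * sin (p \<bullet> w) * (d * cos (p \<bullet> v))) =
        (\<lambda>p. (c * d / 2) * sin (p \<bullet> (w + v)) + (c * d / 2) * sin (p \<bullet> (w - v)))"
      by (rule ext) (simp add: inner_add_right inner_diff_right sin_add sin_diff algebra_simps)
    show "trig_poly (\<lambda>p. c * sin (p \<bullet> w) * (d * cos (p \<bullet> v)))" unfolding eq by (intro trig_poly.tadd trig_poly.tcos trig_poly.tsin)
  next
    have eq: "(\<lambda>p. c * sin (p \<bullet> w) * (d * sin (p \<bullet> v))) =
        (\<lambda>p. (c * d / 2) * cos (p \<bullet> (w - v)) + (- (c * d / 2)) * cos (p \<bullet> (w + v)))"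
      by (rule ext) (simp add: inner_add_right inner_diff_right cos_add cos_diff algebra_simps)
    show "trig_poly (\<lambda>p. c * sin (p \<bullet> w) * (d * sin (p \<bullet> v)))" unfolding eq by (intro trig_poly.tadd trig_poly.tcos trig_poly.tsin)
  }
next
  case (tadd f g)
  {
    case 1
    have "(\<lambda>p. (f p + g p) * (d * cos (p \<bullet> v))) = (\<lambda>p. f p * (d * cos (p \<bullet> v)) + g p * (d * cos (p \<bullet> v)))"
      by (rule ext) (simp add: algebra_simps)
    then show ?case using tadd.IH(1,3) by (simp add: trig_poly.tadd)
  next
    case 2
    have "(\<lambda>p. (f p + g p) * (d * sin (p \<bullet> v))) = (\<lambda>p. f p * (d * sin (p \<bullet> v)) + g p * (d * sin (p \<bullet> v)))"
      by (rule ext) (simp add: algebra_simps)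
    then show ?case using tadd.IH(2,4) by (simp add: trig_poly.tadd)
  }
qed

lemma trig_poly_mult: "trig_poly g \<Longrightarrow> trig_poly f \<Longrightarrow> trig_poly (\<lambda>p. f p * g p)"
proof (induction rule: trig_poly.induct)
  case (tcos c w) then show ?case by (rule trig_poly_mult_cos_sin)
next
  case (tsin c w) then show ?case by (rule trig_poly_mult_cos_sin)
next
  case (tadd g1 g2)
  have "(\<lambda>p. f p * (g1 p + g2 p)) = (\<lambda>p. f p * g1 p + f p * g2 p)" by (rule ext) (simp add: algebra_simps)
  then show ?case using tadd by (simp add: trig_poly.tadd)
qed

lemma trig_poly_separating:
  fixes x y :: "'a::euclidean_space"
  assumes "x \<noteq> y"
  shows "\<exists>f. trig_poly f \<and> f x \<noteq> f y"
proof (rule ccontr)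
  assume "\<not> ?thesis"
  then have eq: "\<And>f. trig_poly f \<Longrightarrow> f x = f y" by blast
  define w where "w = (1 / (norm (x - y))^2) *\<^sub>R (x - y)"
  have n: "norm (x - y) \<noteq> 0" using assms by simp
  have xw: "x \<bullet> w - y \<bullet> w = 1"
  proof -
    have "x \<bullet> w - y \<bullet> w = (x - y) \<bullet> w" by (simp add: inner_diff_left)
    also have "\<dots> = (1 / (norm (x - y))^2) * ((x - y) \<bullet> (x - y))" by (simp add: w_def)
    also have "\<dots> = 1" using n by (simp add: power2_norm_eq_inner[symmetric])
    finally show ?thesis .
  qed
  have c: "cos (x \<bullet> w) = cos (y \<bullet> w)" using eq[OF tcos[of 1 w]] by simp
  have s: "sin (x \<bullet> w) = sin (y \<bullet> w)" using eq[OF tsin[of 1 w]] by simp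
  have "cos (x \<bullet> w - y \<bullet> w) = cos (y \<bullet> w) * cos (y \<bullet> w) + sin (y \<bullet> w) * sin (y \<bullet> w)"
    using c s by (simp add: cos_diff)
  also have "\<dots> = 1" using sin_cos_squared_add[of "y \<bullet> w"] by (simp add: power2_eq_square)
  finally have "cos 1 = (1::real)" using xw by simp
  then obtain n :: int where "1 = real_of_int n * 2 * pi" using cos_one_2pi_int by blast
  moreover have "real_of_int n * 2 * pi \<noteq> 1"
  proof (cases "n = 0")
    case False
    then have "\<bar>real_of_int n\<bar> \<ge> 1" by linarith
    then have "\<bar>real_of_int n * 2 * pi\<bar> \<ge> 2 * pi"
      using pi_gt_zero by (simp add: abs_mult)
    then show ?thesis using pi_gt3 by auto
  qed simp
  ultimately show False by simp
qed

lemma trig_poly_dense: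
  fixes r :: "'a::euclidean_space \<Rightarrow> real"
  assumes "compact K" "continuous_on K r" "e > 0"
  obtains t where "trig_poly t" "\<And>x. x \<in> K \<Longrightarrow> \<bar>r x - t x\<bar> < e"
proof -
  have "\<exists>t. trig_poly t \<and> (\<forall>x\<in>K. \<bar>r x - t x\<bar> < e)"
    by (rule Stone_Weierstrass_HOL[of K trig_poly])
       (use assms trig_poly_const trig_poly_mult trig_poly_separating in
        \<open>auto intro: trig_poly.tadd continuous_on_subset[OF continuous_on_trig_poly]\<close>)
  then show ?thesis using that by blast
qed

lemma integral_mult_trig_poly_eq_0:
  fixes r :: "'a::euclidean_space \<Rightarrow> real"
  assumes int: "\<And>g. continuous_on UNIV g \<Longrightarrow> integrable lborel (\<lambda>p. r p * g p)"
    and orth_c: "\<And>\<xi>. (\<integral>p. r p * cos (p \<bullet> \<xi>) \<partial>lborel) = 0"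
    and orth_s: "\<And>\<xi>. (\<integral>p. r p * sin (p \<bullet> \<xi>) \<partial>lborel) = 0"
    and "trig_poly t"
  shows "(\<integral>p. r p * t p \<partial>lborel) = 0"
  using assms(4)
proof (induction rule: trig_poly.induct)
  case (tcos c w)
  then show ?case using orth_c[of w] by (simp add: mult.left_commute)
next
  case (tsin c w)
  then show ?case using orth_s[of w] by (simp add: mult.left_commute)
next
  case (tadd f g)
  then show ?case
    by (simp add: distrib_left Bochner_Integration.integral_add[OF int int] continuous_on_trig_poly)
qed

text \<open>Approximating \<open>r\<close> by trigonometric polynomials \<open>t\<close> on its support gives
  \<open>\<integral>r\<^sup>2 = \<integral>r (r - t) \<le> e \<integral>|r|\<close> for every \<open>e > 0\<close>.\<close>
lemma cos_sin_integrals_zero_imp_zero: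
  fixes r :: "'a::euclidean_space \<Rightarrow> real"
  assumes cr: "continuous_on UNIV r" and K: "compact K" and van: "\<And>x. x \<notin> K \<Longrightarrow> r x = 0"
    and orth_c: "\<And>\<xi>. (\<integral>p. r p * cos (p \<bullet> \<xi>) \<partial>lborel) = 0"
    and orth_s: "\<And>\<xi>. (\<integral>p. r p * sin (p \<bullet> \<xi>) \<partial>lborel) = 0"
  shows "r x = 0"
proof -
  have intg: "integrable lborel (\<lambda>p. r p * g p)" if "continuous_on UNIV g" for g
    by (rule integrable_lborel_compact_support[OF _ K]) (use van that cr in \<open>auto intro!: continuous_intros\<close>)
  have orth: "(\<integral>p. r p * t p \<partial>lborel) = 0" if "trig_poly t" for t
    by (rule integral_mult_trig_poly_eq_0[OF intg orth_c orth_s that])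
  define I where "I = (\<integral>p. \<bar>r p\<bar> \<partial>lborel)"
  have bound: "(\<integral>p. r p * r p \<partial>lborel) \<le> e * I" if e: "e > 0" for e
  proof -
    obtain t where t: "trig_poly t" "\<And>x. x \<in> K \<Longrightarrow> \<bar>r x - t x\<bar> < e"
      using trig_poly_dense[OF K continuous_on_subset[OF cr] e] by blast
    have ct: "continuous_on UNIV t" by (rule continuous_on_trig_poly[OF t(1)])
    have "(\<integral>p. r p * r p \<partial>lborel) = (\<integral>p. r p * (r p - t p) + r p * t p \<partial>lborel)"
      by (simp add: algebra_simps)
    also have "\<dots> = (\<integral>p. r p * (r p - t p) \<partial>lborel)"
      using orth[OF t(1)] Bochner_Integration.integral_add[OF intg intg[OF ct], of "\<lambda>p. r p - t p"] cr ct
      by (simp add: continuous_on_diff)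
    also have "\<dots> \<le> (\<integral>p. e * \<bar>r p\<bar> \<partial>lborel)"
    proof (rule integral_mono)
      show "integrable lborel (\<lambda>p. r p * (r p - t p))" by (rule intg) (use cr ct in \<open>auto intro: continuous_intros\<close>)
      show "integrable lborel (\<lambda>p. e * \<bar>r p\<bar>)"
        by (rule integrable_lborel_compact_support[OF _ K]) (use van cr in \<open>auto intro!: continuous_intros\<close>)
      show "r p * (r p - t p) \<le> e * \<bar>r p\<bar>" for p
      proof (cases "p \<in> K")
        case True
        have "r p * (r p - t p) \<le> \<bar>r p\<bar> * \<bar>r p - t p\<bar>" by (simp add: abs_mult[symmetric])
        also have "\<dots> \<le> \<bar>r p\<bar> * e" using t(2)[OF True] by (intro mult_left_mono) auto
        finally show ?thesis by (simp add: mult.commute)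
      qed (simp add: van)
    qed
    also have "\<dots> = e * I" by (simp add: I_def)
    finally show ?thesis .
  qed
  have "(\<integral>p. r p * r p \<partial>lborel) \<le> 0 + e" if "e > 0" for e
  proof (cases "I = 0")
    case True
    then show ?thesis using bound[of 1] that by simp
  next
    case False
    then have "I > 0" by (simp add: I_def order_neq_le_trans)
    then show ?thesis using bound[of "e / I"] that by simp
  qed
  then have "(\<integral>p. r p * r p \<partial>lborel) \<le> 0" by (rule field_le_epsilon)
  then have "(\<integral>p. r p * r p \<partial>lborel) = 0" by (simp add: antisym)
  then have "AE p in lborel. r p * r p = 0"
    using integral_nonneg_eq_0_iff_AE[OF intg[OF cr]] by simp
  then have "r x * r x = 0" by (rule continuous_AE_zero_imp_zero[rotated]) (use cr in \<open>auto intro!: continuous_intros\<close>)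
  then show ?thesis by simp
qed

definition fourier :: "('a::euclidean_space \<Rightarrow> complex) \<Rightarrow> 'a \<Rightarrow> complex" where
  "fourier g \<xi> = (\<integral>p. exp (- \<i> * complex_of_real (p \<bullet> \<xi>)) * g p \<partial>lborel)"

lemma fourier_p_eq_fourier: "fourier_p w a = fourier (\<lambda>p. complex_of_real (w a p))"
  by (simp add: fun_eq_iff fourier_p_def fourier_def)

lemma fourier_full_eq_fourier: "fourier_full = fourier"
  by (simp add: fun_eq_iff fourier_full_def fourier_def inner_prod_def)

lemma continuous_on_fourier:
  fixes g :: "'a::euclidean_space \<Rightarrow> complex"
  assumes cg: "continuous_on UNIV g" and K: "compact K" and van: "\<And>x. x \<notin> K \<Longrightarrow> g x = 0"
  shows "continuous_on UNIV (fourier g)"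
  unfolding fourier_def
  by (rule continuous_on_parametric_integral[OF _ K, where F="\<lambda>\<xi> p. exp (- \<i> * complex_of_real (p \<bullet> \<xi>)) * g p"])
     (use van in \<open>auto intro!: continuous_intros continuous_on_compose_UNIV[OF cg]\<close>)

lemma fourier_zero_imp_zero:
  fixes g :: "'a::euclidean_space \<Rightarrow> complex"
  assumes cg: "continuous_on UNIV g" and K: "compact K" and van: "\<And>x. x \<notin> K \<Longrightarrow> g x = 0"
    and FT: "\<And>\<xi>. fourier g \<xi> = 0"
  shows "g x = 0"
proof -
  have intc: "integrable lborel (\<lambda>p. c (p \<bullet> \<xi>) * g p)" if "continuous_on UNIV c" for c :: "real \<Rightarrow> complex" and \<xi>
    by (rule integrable_lborel_compact_support[OF _ K])
       (use van cg in \<open>auto intro!: continuous_intros continuous_on_compose_UNIV[OF that]\<close>)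
  have E1: "(\<integral>p. exp (\<i> * complex_of_real (p \<bullet> \<xi>)) * g p \<partial>lborel) = 0" for \<xi>
    using FT[of "- \<xi>"] by (simp add: fourier_def inner_minus_right)
  have E2: "(\<integral>p. exp (- (\<i> * complex_of_real (p \<bullet> \<xi>))) * g p \<partial>lborel) = 0" for \<xi>
    using FT[of \<xi>] by (simp add: fourier_def)
  have int1: "integrable lborel (\<lambda>p. exp (\<i> * complex_of_real (p \<bullet> \<xi>)) * g p)" for \<xi>
    by (rule intc) (intro continuous_intros)
  have int2: "integrable lborel (\<lambda>p. exp (- (\<i> * complex_of_real (p \<bullet> \<xi>))) * g p)" for \<xi>
    by (rule intc) (intro continuous_intros)
  have cos: "(\<integral>p. cos (complex_of_real (p \<bullet> \<xi>)) * g p \<partial>lborel) = 0" for \<xi>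
  proof -
    have "(\<integral>p. cos (complex_of_real (p \<bullet> \<xi>)) * g p \<partial>lborel) =
        (\<integral>p. exp (\<i> * complex_of_real (p \<bullet> \<xi>)) * g p + exp (- (\<i> * complex_of_real (p \<bullet> \<xi>))) * g p \<partial>lborel) / 2"
      unfolding cos_exp_eq by (simp add: distrib_right)
    then show ?thesis by (simp add: Bochner_Integration.integral_add[OF int1 int2] E1 E2)
  qed
  have sin: "(\<integral>p. sin (complex_of_real (p \<bullet> \<xi>)) * g p \<partial>lborel) = 0" for \<xi>
  proof -
    have "(\<integral>p. sin (complex_of_real (p \<bullet> \<xi>)) * g p \<partial>lborel) =
        \<i> * (\<integral>p. exp (- (\<i> * complex_of_real (p \<bullet> \<xi>))) * g p - exp (\<i> * complex_of_real (p \<bullet> \<xi>)) * g p \<partial>lborel) / 2"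
      unfolding sin_exp_eq' by (simp add: left_diff_distrib mult.assoc)
    then show ?thesis by (simp add: Bochner_Integration.integral_diff[OF int2 int1] E1 E2)
  qed
  have "P (g x) = 0" if P: "bounded_linear P" for P :: "complex \<Rightarrow> real"
  proof (rule cos_sin_integrals_zero_imp_zero[OF _ K])
    interpret P: bounded_linear P by (rule P)
    have P_mult: "P (complex_of_real c * z) = c * P z" for c z
      using P.scaleR[of c z] by (simp add: scaleR_conv_of_real)
    have P_int: "(\<integral>p. P (c (complex_of_real (p \<bullet> \<xi>)) * g p) \<partial>lborel) = 0"
      if "continuous_on UNIV c" "\<And>\<xi>. (\<integral>p. c (complex_of_real (p \<bullet> \<xi>)) * g p \<partial>lborel) = 0" for c \<xi>
    proof -
      have "continuous_on UNIV (\<lambda>t. c (complex_of_real t))"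
        by (rule continuous_on_compose_UNIV[OF that(1)]) (intro continuous_intros)
      from integral_bounded_linear[OF P intc[OF this]] show ?thesis using that(2) P.zero by simp
    qed
    show "continuous_on UNIV (\<lambda>p. P (g p))" using P.continuous_on[OF cg] .
    show "P (g y) = 0" if "y \<notin> K" for y using van[OF that] P.zero by simp
    show "(\<integral>p. P (g p) * cos (p \<bullet> \<xi>) \<partial>lborel) = 0" for \<xi>
    proof -
      have "P (cos (complex_of_real (p \<bullet> \<xi>)) * g p) = P (g p) * cos (p \<bullet> \<xi>)" for p
        using P_mult[of "cos (p \<bullet> \<xi>)" "g p"] by (simp add: cos_of_real mult.commute)
      then show ?thesis using P_int[of cos \<xi>] cos by (simp add: continuous_on_cos continuous_on_id)
    qed
    show "(\<integral>p. P (g p) * sin (p \<bullet> \<xi>) \<partial>lborel) = 0" for \<xi>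
    proof -
      have "P (sin (complex_of_real (p \<bullet> \<xi>)) * g p) = P (g p) * sin (p \<bullet> \<xi>)" for p
        using P_mult[of "sin (p \<bullet> \<xi>)" "g p"] by (simp add: sin_of_real mult.commute)
      then show ?thesis using P_int[of sin \<xi>] sin by (simp add: continuous_on_sin continuous_on_id)
    qed
  qed
  then show ?thesis using bounded_linear_Re bounded_linear_Im by (simp add: complex_eq_iff)
qed

section \<open>Null sets and the map \<open>(a, \<xi>) \<mapsto> (a \<bullet> \<xi>, \<xi>)\<close>\<close>

lemma continuous_vimage_borel:
  fixes f :: "'x::topological_space \<Rightarrow> 'y::topological_space"
  assumes "continuous_on UNIV f" "A \<in> sets borel"
  shows "f -` A \<in> sets borel"
  by (rule measurable_sets_borel[OF borel_measurable_continuous_onI[OF assms(1)] assms(2)])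

lemma sets_lborel_pair:
  "sets (lborel \<Otimes>\<^sub>M (lborel :: 'y::euclidean_space measure)) = sets (borel :: ('x::euclidean_space \<times> 'y) measure)"
  by (simp only: lborel_prod sets_lborel)

lemma null_sets_lborel_affine_vimage:
  fixes M :: "real set"
  assumes c: "c \<noteq> 0" and M: "M \<in> null_sets lborel"
  shows "{r::real. t + c * r \<in> M} \<in> null_sets lborel"
proof -
  have Mb: "M \<in> sets borel" using M by (simp add: null_sets_def)
  define f where "f = (\<lambda>r::real. t + c * r)"
  have fm: "f \<in> measurable lborel borel" unfolding f_def by simp
  have pre: "{r::real. t + c * r \<in> M} = f -` M" by (auto simp: f_def)
  have meas: "f -` M \<in> sets lborel"
    using measurable_sets[OF fm Mb] by simp
  have "emeasure lborel M = emeasure (density (distr lborel borel f) (\<lambda>_. ennreal \<bar>c\<bar>)) M"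
    using arg_cong[OF lborel_real_affine[OF c, of t], of "\<lambda>m. emeasure m M"] by (simp add: f_def)
  also have "\<dots> = ennreal \<bar>c\<bar> * emeasure (distr lborel borel f) M"
    by (rule emeasure_density_const) (simp add: Mb)
  also have "\<dots> = ennreal \<bar>c\<bar> * emeasure lborel (f -` M)"
    using emeasure_distr[OF fm Mb] by simp
  finally have "ennreal \<bar>c\<bar> * emeasure lborel (f -` M) = 0" using null_setsD1[OF M] by simp
  then have "emeasure lborel (f -` M) = 0" using c by simp
  then show ?thesis using meas pre by (simp add: null_sets_def)
qed

lemma emeasure_lborel_translate_vimage:
  fixes A :: "'e::euclidean_space set"
  assumes A: "A \<in> sets borel"
  shows "emeasure lborel ((\<lambda>x. x + v) -` A) = emeasure lborel A"
proof -
  have fm: "((+) v) \<in> measurable lborel borel" by simp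
  have "emeasure lborel A = emeasure (distr lborel borel ((+) v)) A" by (simp add: lborel_distr_plus)
  also have "\<dots> = emeasure lborel ((+) v -` A)" using emeasure_distr[OF fm A] by simp
  also have "(+) v -` A = (\<lambda>x. x + v) -` A" by (auto simp: add.commute)
  finally show ?thesis by simp
qed

text \<open>Measure \<open>Z = {(a, r). (a + r \<xi>) \<bullet> \<xi> \<in> M}\<close> in two ways: its \<open>a\<close>-sections are affine
  preimages of \<open>M\<close>, hence null, while every \<open>r\<close>-section is a translate of the set in question.\<close>
lemma null_sets_inner_vimage:
  fixes \<xi> :: "'a::euclidean_space" and M :: "real set"
  assumes \<xi>: "\<xi> \<noteq> 0" and M: "M \<in> null_sets lborel"
  shows "{a::'a. a \<bullet> \<xi> \<in> M} \<in> null_sets lborel"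
proof -
  have Mb: "M \<in> sets borel" using M by (simp add: null_sets_def)
  define A where "A = {a::'a. a \<bullet> \<xi> \<in> M}"
  have Ab: "A \<in> sets borel"
  proof -
    have "(\<lambda>a::'a. a \<bullet> \<xi>) -` M \<in> sets borel"
      by (rule continuous_vimage_borel[OF _ Mb]) (auto intro: continuous_intros)
    then show ?thesis by (simp add: A_def vimage_def)
  qed
  define c where "c = \<xi> \<bullet> \<xi>"
  have c: "c \<noteq> 0" using \<xi> by (simp add: c_def)
  define Z where "Z = {z::'a \<times> real. (fst z + snd z *\<^sub>R \<xi>) \<bullet> \<xi> \<in> M}"
  have Zb: "Z \<in> sets (lborel \<Otimes>\<^sub>M lborel)"
  proof -
    have "(\<lambda>z::'a \<times> real. (fst z + snd z *\<^sub>R \<xi>) \<bullet> \<xi>) -` M \<in> sets borel"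
      by (rule continuous_vimage_borel[OF _ Mb]) (auto intro!: continuous_intros)
    then show ?thesis unfolding sets_lborel_pair by (simp add: Z_def vimage_def)
  qed
  have "emeasure (lborel \<Otimes>\<^sub>M lborel) Z = (\<integral>\<^sup>+ a. emeasure lborel (Pair a -` Z) \<partial>(lborel::'a measure))"
    by (rule lborel.emeasure_pair_measure_alt[OF Zb])
  also have "\<dots> = (\<integral>\<^sup>+ a. 0 \<partial>(lborel::'a measure))"
  proof (rule nn_integral_cong)
    fix a :: 'a
    have "Pair a -` Z = {r. a \<bullet> \<xi> + c * r \<in> M}"
      by (auto simp: Z_def c_def inner_add_left mult.commute)
    then show "emeasure lborel (Pair a -` Z) = 0"
      using null_sets_lborel_affine_vimage[OF c M, of "a \<bullet> \<xi>"] by (simp add: null_sets_def)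
  qed
  finally have Z0: "emeasure (lborel \<Otimes>\<^sub>M lborel) Z = 0" by simp
  have "emeasure (lborel \<Otimes>\<^sub>M lborel) Z = (\<integral>\<^sup>+ r. emeasure lborel ((\<lambda>x. (x, r)) -` Z) \<partial>(lborel::real measure))"
    by (rule lborel_pair.emeasure_pair_measure_alt2[OF Zb])
  also have "\<dots> = (\<integral>\<^sup>+ r. emeasure lborel A \<partial>(lborel::real measure))"
  proof (rule nn_integral_cong)
    fix r :: real
    have "(\<lambda>x. (x, r)) -` Z = (\<lambda>x. x + r *\<^sub>R \<xi>) -` A" by (auto simp: Z_def A_def)
    then show "emeasure lborel ((\<lambda>x. (x, r)) -` Z) = emeasure lborel A"
      using emeasure_lborel_translate_vimage[OF Ab] by simp
  qed
  also have "\<dots> = emeasure lborel A * \<infinity>" by (simp add: emeasure_lborel_UNIV)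
  finally have "emeasure lborel A * \<infinity> = 0" using Z0 by simp
  then have "emeasure lborel A = 0" by simp
  then show ?thesis using Ab by (simp add: null_sets_def A_def)
qed

lemma null_sets_pair_inner_vimage:
  fixes N :: "(real \<times> 'a::euclidean_space) set"
  assumes N: "N \<in> null_sets lborel"
  shows "{z::'a \<times> 'a. (fst z \<bullet> snd z, snd z) \<in> N} \<in> null_sets (lborel \<Otimes>\<^sub>M lborel)"
proof -
  have Nb: "N \<in> sets borel" using N by (simp add: null_sets_def)
  have Np: "N \<in> sets (lborel \<Otimes>\<^sub>M lborel)" using Nb unfolding sets_lborel_pair by simp
  define E where "E = {z::'a \<times> 'a. (fst z \<bullet> snd z, snd z) \<in> N}"
  have Eb: "E \<in> sets (lborel \<Otimes>\<^sub>M lborel)"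
  proof -
    have "(\<lambda>z::'a \<times> 'a. (fst z \<bullet> snd z, snd z)) -` N \<in> sets borel"
      by (rule continuous_vimage_borel[OF _ Nb]) (auto intro!: continuous_intros)
    then show ?thesis unfolding sets_lborel_pair by (simp add: E_def vimage_def)
  qed
  have "emeasure (lborel \<Otimes>\<^sub>M lborel) N = 0" using N by (simp add: lborel_prod null_sets_def)
  then have "(\<integral>\<^sup>+ \<xi>. emeasure lborel ((\<lambda>x. (x, \<xi>)) -` N) \<partial>(lborel::'a measure)) = 0"
    using lborel_pair.emeasure_pair_measure_alt2[OF Np] by simp
  then have ae1: "AE \<xi> in (lborel::'a measure). emeasure lborel ((\<lambda>x. (x, \<xi>)) -` N) = 0"
    using nn_integral_0_iff_AE[OF lborel_pair.measurable_emeasure_Pair2[OF Np]] by simp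
  have ae2: "AE \<xi> in (lborel::'a measure). \<xi> \<noteq> 0" by (rule AE_lborel_singleton)
  have "AE \<xi> in (lborel::'a measure). emeasure lborel ((\<lambda>x. (x, \<xi>)) -` E) = 0"
    using ae1 ae2
  proof eventually_elim
    case (elim \<xi>)
    have sl: "(\<lambda>x. (x, \<xi>)) -` N \<in> null_sets lborel"
      using elim(1) sets_Pair2[OF Np] by (simp add: null_sets_def)
    have "{a::'a. a \<bullet> \<xi> \<in> (\<lambda>x. (x, \<xi>)) -` N} \<in> null_sets lborel"
      by (rule null_sets_inner_vimage[OF elim(2) sl])
    moreover have "(\<lambda>x. (x, \<xi>)) -` E = {a::'a. a \<bullet> \<xi> \<in> (\<lambda>x. (x, \<xi>)) -` N}" by (auto simp: E_def)
    ultimately show ?case by (simp add: null_sets_def)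
  qed
  then have "(\<integral>\<^sup>+ \<xi>. emeasure lborel ((\<lambda>x. (x, \<xi>)) -` E) \<partial>(lborel::'a measure)) = 0"
    using nn_integral_0_iff_AE[OF lborel_pair.measurable_emeasure_Pair2[OF Eb]] by simp
  then have "emeasure (lborel \<Otimes>\<^sub>M lborel) E = 0"
    using lborel_pair.emeasure_pair_measure_alt2[OF Eb] by simp
  then show ?thesis using Eb by (simp add: null_sets_def E_def)
qed

lemma AE_lborel_inner_Pair:
  fixes P :: "real \<times> 'a::euclidean_space \<Rightarrow> bool"
  assumes "AE z in lborel. P z"
  shows "AE a in lborel. AE \<xi> in lborel. P (a \<bullet> \<xi>, \<xi>)"
proof -
  obtain N where N: "N \<in> null_sets lborel" and NP: "\<And>z. \<not> P z \<Longrightarrow> z \<in> N"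
  proof -
    from AE_E[OF assms] obtain N where "{z \<in> space lborel. \<not> P z} \<subseteq> N" "emeasure lborel N = 0" "N \<in> sets lborel"
      by blast
    then show ?thesis using that by (auto simp: null_sets_def)
  qed
  have "AE z in lborel \<Otimes>\<^sub>M lborel. (fst z \<bullet> snd z, snd z) \<notin> N"
    by (rule AE_I'[OF null_sets_pair_inner_vimage[OF N]]) auto
  from lborel_pair.AE_pair[OF this] have "AE a in lborel. AE \<xi> in lborel. (a \<bullet> \<xi>, \<xi>) \<notin> N"
    by simp
  then show ?thesis
  proof (rule eventually_mono)
    fix a assume "AE \<xi> in lborel. (a \<bullet> \<xi>, \<xi>) \<notin> N"
    then show "AE \<xi> in lborel. P (a \<bullet> \<xi>, \<xi>)" by (rule eventually_mono) (use NP in blast)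
  qed
qed

section \<open>The cone transform\<close>

definition supported_in_slab :: "('a::euclidean_space \<times> real \<Rightarrow> 'b::zero) \<Rightarrow> real \<Rightarrow> real \<Rightarrow> real \<Rightarrow> bool" where
  "supported_in_slab \<phi> c1 c2 D \<longleftrightarrow> 0 < c1 \<and> c1 \<le> c2 \<and> 0 \<le> D \<and>
     (\<forall>y s. \<phi> (y, s) \<noteq> 0 \<longrightarrow> c1 \<le> s \<and> s \<le> c2 \<and> norm y \<le> D)"

definition ray_integral :: "nat \<Rightarrow> ('a::euclidean_space \<times> real \<Rightarrow> complex) \<Rightarrow> 'a \<Rightarrow> 'a \<Rightarrow> complex" where
  "ray_integral k \<phi> a p = (\<integral>s. \<phi> (a + s *\<^sub>R p, s) * complex_of_real s ^ k \<partial>lborel)"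

text \<open>The substitution \<open>(y, s) = (q / (-t), -1 / t)\<close>, weighted so that the Fourier transform
  of \<open>ray_integral k \<phi> a\<close> becomes a restriction of the Fourier transform of \<open>cone_transform k \<phi>\<close>.\<close>
definition cone_transform :: "nat \<Rightarrow> ('a::euclidean_space \<times> real \<Rightarrow> complex) \<Rightarrow> real \<times> 'a \<Rightarrow> complex" where
  "cone_transform k \<phi> z = (if fst z < 0 then complex_of_real ((- inverse (fst z)) ^ (k + 2)) *
       \<phi> ((- inverse (fst z)) *\<^sub>R snd z, - inverse (fst z)) else 0)"

lemma supported_in_slabD:
  assumes "supported_in_slab \<phi> c1 c2 D" "\<phi> (y, s) \<noteq> 0"
  shows "c1 \<le> s" "s \<le> c2" "norm y \<le> D"
  using assms by (auto simp: supported_in_slab_def)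

lemma supported_in_slab_bounds: "supported_in_slab \<phi> c1 c2 D \<Longrightarrow> 0 < c1 \<and> c1 \<le> c2 \<and> 0 \<le> D"
  by (simp add: supported_in_slab_def)

lemma ray_integrand_vanishes:
  assumes sc: "supported_in_slab \<phi> c1 c2 D" and nz: "\<phi> (a + s *\<^sub>R p, s) \<noteq> 0"
  shows "norm p \<le> (D + norm a) / c1"
proof -
  note d = supported_in_slabD[OF sc nz] and c = supported_in_slab_bounds[OF sc]
  have "s * norm p \<le> D + norm a"
    using d(1,3) c norm_triangle_ineq4[of "a + s *\<^sub>R p" a] by simp
  then have "c1 * norm p \<le> D + norm a"
    using d(1) by (smt (verit) mult_right_mono norm_ge_zero)
  then show ?thesis using c by (simp add: field_simps)
qed

lemma ray_integral_eq_0: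
  assumes "supported_in_slab \<phi> c1 c2 D" "norm p > (D + norm a) / c1"
  shows "ray_integral k \<phi> a p = 0"
proof -
  have "\<phi> (a + s *\<^sub>R p, s) = 0" for s
    using ray_integrand_vanishes[OF assms(1), of a s p] assms(2) by linarith
  then show ?thesis by (simp add: ray_integral_def)
qed

lemma continuous_on_ray_integral:
  fixes \<phi> :: "'a::euclidean_space \<times> real \<Rightarrow> complex"
  assumes c\<phi>: "continuous_on UNIV \<phi>" and sc: "supported_in_slab \<phi> c1 c2 D"
  shows "continuous_on UNIV (\<lambda>z. ray_integral k \<phi> (fst z) (snd z))"
  unfolding ray_integral_def
  by (rule continuous_on_parametric_integral[OF _ compact_Icc[of c1 c2],
        where F="\<lambda>z s. \<phi> (fst z + s *\<^sub>R snd z, s) * complex_of_real s ^ k"])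
     (use supported_in_slabD[OF sc] in \<open>force intro!: continuous_intros continuous_on_compose_UNIV[OF c\<phi>]\<close>)+

lemma ray_integral_of_real:
  "ray_integral k (\<lambda>z. complex_of_real (f z)) a p = complex_of_real (\<integral>s. f (a + s *\<^sub>R p, s) * s ^ k \<partial>lborel)"
  unfolding ray_integral_def integral_complex_of_real[symmetric] by simp

lemma continuous_on_cone_transform:
  fixes \<phi> :: "'a::euclidean_space \<times> real \<Rightarrow> complex"
  assumes c\<phi>: "continuous_on UNIV \<phi>" and sc: "supported_in_slab \<phi> c1 c2 D"
  shows "continuous_on UNIV (cone_transform k \<phi>)"
proof (rule continuous_on_vanishing_outside[of "{z. fst z < 0}" _ "{z. fst z \<le> - inverse c2}"])
  have "continuous_on {z::real \<times> 'a. fst z < 0} (\<lambda>z. complex_of_real ((- inverse (fst z)) ^ (k + 2)) *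
      \<phi> ((- inverse (fst z)) *\<^sub>R snd z, - inverse (fst z)))"
    by (intro continuous_intros continuous_on_compose_UNIV[OF c\<phi>]) auto
  then show "continuous_on {z. fst z < 0} (cone_transform k \<phi>)"
    by (rule continuous_on_cong[THEN iffD1, rotated 2]) (auto simp: cone_transform_def)
  show "open {z::real \<times> 'a. fst z < 0}" "closed {z::real \<times> 'a. fst z \<le> - inverse c2}"
    by (auto intro!: open_Collect_less closed_Collect_le continuous_intros)
  show "{z::real \<times> 'a. fst z \<le> - inverse c2} \<subseteq> {z. fst z < 0}"
    using supported_in_slab_bounds[OF sc] by (auto intro: order_le_less_trans[of _ "- inverse c2"])
  show "cone_transform k \<phi> z = 0" if "z \<notin> {z. fst z \<le> - inverse c2}" for z
  proof (cases "fst z < 0")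
    case True
    have "c2 > 0" using supported_in_slab_bounds[OF sc] by simp
    with that True have "- inverse (fst z) > c2"
      by (smt (verit) inverse_less_iff_less_neg inverse_minus_eq inverse_inverse_eq mem_Collect_eq)
    then show ?thesis using True supported_in_slabD(2)[OF sc] by (force simp: cone_transform_def)
  qed (simp add: cone_transform_def)
qed

lemma cone_transform_support:
  assumes sc: "supported_in_slab \<phi> c1 c2 D" and nz: "cone_transform k \<phi> (t, q) \<noteq> 0"
  shows "- inverse c1 \<le> t" "t \<le> - inverse c2" "norm q \<le> - D * t"
proof -
  have c: "0 < c1" "c1 \<le> c2" "0 \<le> D" using supported_in_slab_bounds[OF sc] by auto
  have t0: "t < 0" using nz by (simp add: cone_transform_def split: if_splits)
  then have nz': "\<phi> ((- inverse t) *\<^sub>R q, - inverse t) \<noteq> 0" using nz by (simp add: cone_transform_def)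
  note s = supported_in_slabD[OF sc nz']
  show "- inverse c1 \<le> t" using s(1) t0 c
    by (smt (verit) inverse_le_iff_le_neg inverse_minus_eq inverse_inverse_eq)
  show "t \<le> - inverse c2" using s(2) t0 c
    by (smt (verit) inverse_le_iff_le_neg inverse_minus_eq inverse_inverse_eq)
  have "(- inverse t) * norm q \<le> D" using s(3) t0 by simp
  then show "norm q \<le> - D * t" using t0 by (simp add: field_simps)
qed

text \<open>Both Fourier transforms in the main identity reduce to the double integral of this kernel.\<close>
definition slab_kernel :: "nat \<Rightarrow> ('a::euclidean_space \<times> real \<Rightarrow> complex) \<Rightarrow> real \<Rightarrow> 'a \<Rightarrow> 'a \<Rightarrow> real \<Rightarrow> complex" where
  "slab_kernel k \<phi> \<sigma> \<xi> q s = complex_of_real s ^ k * exp (\<i> * complex_of_real (\<sigma> * inverse s)) *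
     exp (- \<i> * complex_of_real (q \<bullet> \<xi>)) * \<phi> (s *\<^sub>R q, s)"

lemma slab_kernel_eq_0:
  assumes sc: "supported_in_slab \<phi> c1 c2 D" and qs: "(q, s) \<notin> cball 0 (D / c1) \<times> {c1..c2}"
  shows "slab_kernel k \<phi> \<sigma> \<xi> q s = 0"
proof (rule ccontr)
  assume "slab_kernel k \<phi> \<sigma> \<xi> q s \<noteq> 0"
  then have "\<phi> (0 + s *\<^sub>R q, s) \<noteq> 0" by (auto simp: slab_kernel_def)
  from ray_integrand_vanishes[OF sc this] supported_in_slabD[OF sc this] qs show False by simp
qed

lemma continuous_on_slab_kernel:
  fixes \<phi> :: "'a::euclidean_space \<times> real \<Rightarrow> complex"
  assumes c\<phi>: "continuous_on UNIV \<phi>" and sc: "supported_in_slab \<phi> c1 c2 D"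
  shows "continuous_on UNIV (\<lambda>z. slab_kernel k \<phi> \<sigma> \<xi> (fst z) (snd z))"
proof (rule continuous_on_vanishing_outside[of "{z. snd z > 0}" _ "{z. c1 \<le> snd z}"])
  show "continuous_on {z::'a \<times> real. snd z > 0} (\<lambda>z. slab_kernel k \<phi> \<sigma> \<xi> (fst z) (snd z))"
    unfolding slab_kernel_def by (intro continuous_intros continuous_on_compose_UNIV[OF c\<phi>]) auto
  show "open {z::'a \<times> real. snd z > 0}" "closed {z::'a \<times> real. c1 \<le> snd z}"
    by (auto intro!: open_Collect_less closed_Collect_le continuous_intros)
  show "{z::'a \<times> real. c1 \<le> snd z} \<subseteq> {z. snd z > 0}"
    using supported_in_slab_bounds[OF sc] by auto
  show "slab_kernel k \<phi> \<sigma> \<xi> (fst z) (snd z) = 0" if "z \<notin> {z. c1 \<le> snd z}" for z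
    using slab_kernel_eq_0[OF sc, of "fst z" "snd z"] that by (auto simp: mem_Times_iff)
qed

lemma fourier_ray_integral:
  fixes \<phi> :: "'a::euclidean_space \<times> real \<Rightarrow> complex"
  assumes c\<phi>: "continuous_on UNIV \<phi>" and sc: "supported_in_slab \<phi> c1 c2 D"
  shows "fourier (ray_integral k \<phi> a) \<xi> = (\<integral>q. \<integral>s. slab_kernel k \<phi> (a \<bullet> \<xi>) \<xi> q s \<partial>lborel \<partial>lborel)"
proof -
  have c: "0 < c1" "c1 \<le> c2" "0 \<le> D" using supported_in_slab_bounds[OF sc] by auto
  define F where "F p s = exp (- \<i> * complex_of_real (p \<bullet> \<xi>)) * (\<phi> (a + s *\<^sub>R p, s) * complex_of_real s ^ k)"
    for p s
  have F_cont: "continuous_on UNIV (\<lambda>z. F (fst z) (snd z))"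
    unfolding F_def by (intro continuous_intros continuous_on_compose_UNIV[OF c\<phi>])
  have F_eq_0: "F p s = 0" if "(p, s) \<notin> cball 0 ((D + norm a) / c1) \<times> {c1..c2}" for p s
    using that ray_integrand_vanishes[OF sc] supported_in_slabD[OF sc] by (force simp: F_def)
  have "fourier (ray_integral k \<phi> a) \<xi> = (\<integral>p. \<integral>s. F p s \<partial>lborel \<partial>lborel)"
    by (simp add: F_def ray_integral_def fourier_def)
  also have "\<dots> = (\<integral>s. \<integral>p. F p s \<partial>lborel \<partial>lborel)"
    using lborel_pair_integral_compact_support[where K="cball 0 ((D + norm a) / c1) \<times> {c1..c2}", OF F_cont _ F_eq_0]
    by (simp add: compact_Times)
  also have "\<dots> = (\<integral>s. \<integral>q. slab_kernel k \<phi> (a \<bullet> \<xi>) \<xi> q s \<partial>lborel \<partial>lborel)"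
  proof (rule Bochner_Integration.integral_cong[OF refl])
    fix s :: real
    show "(\<integral>p. F p s \<partial>lborel) = (\<integral>q. slab_kernel k \<phi> (a \<bullet> \<xi>) \<xi> q s \<partial>lborel)"
    proof (cases "s > 0")
      case False
      then have "F p s = 0" "slab_kernel k \<phi> (a \<bullet> \<xi>) \<xi> p s = 0" for p
        using supported_in_slabD(1)[OF sc] c by (fastforce simp: F_def slab_kernel_def)+
      then show ?thesis by simp
    next
      case True
      text \<open>Substitute \<open>p = q - a / s\<close>.\<close>
      have "F (q + (- inverse s *\<^sub>R a)) s = slab_kernel k \<phi> (a \<bullet> \<xi>) \<xi> q s" for q
      proof -
        have "a + s *\<^sub>R (q + (- inverse s *\<^sub>R a)) = s *\<^sub>R q" using True by (simp add: algebra_simps)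
        moreover have "exp (- \<i> * complex_of_real ((q + (- inverse s *\<^sub>R a)) \<bullet> \<xi>)) =
            exp (\<i> * complex_of_real (a \<bullet> \<xi> * inverse s)) * exp (- \<i> * complex_of_real (q \<bullet> \<xi>))"
          by (simp add: inner_add_left exp_add[symmetric] algebra_simps)
        ultimately show ?thesis by (simp add: F_def slab_kernel_def algebra_simps)
      qed
      moreover have "(\<lambda>p. F p s) \<in> borel_measurable borel"
        by (intro borel_measurable_continuous_onI continuous_on_slice_left[OF F_cont])
      ultimately show ?thesis
        using lborel_integral_translate[of "\<lambda>p. F p s" "- inverse s *\<^sub>R a"] by simp
    qed
  qed
  also have "\<dots> = (\<integral>q. \<integral>s. slab_kernel k \<phi> (a \<bullet> \<xi>) \<xi> q s \<partial>lborel \<partial>lborel)"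
    using lborel_pair_integral_compact_support[where K="cball 0 (D / c1) \<times> {c1..c2}",
        OF continuous_on_slab_kernel[OF c\<phi> sc] _ slab_kernel_eq_0[OF sc]]
    by (simp add: compact_Times)
  finally show ?thesis .
qed

lemma fourier_cone_transform:
  fixes \<phi> :: "'a::euclidean_space \<times> real \<Rightarrow> complex"
  assumes c\<phi>: "continuous_on UNIV \<phi>" and sc: "supported_in_slab \<phi> c1 c2 D"
  shows "fourier (cone_transform k \<phi>) (\<sigma>, \<xi>) = (\<integral>q. \<integral>s. slab_kernel k \<phi> \<sigma> \<xi> q s \<partial>lborel \<partial>lborel)"
proof -
  have c: "0 < c1" "c1 \<le> c2" "0 \<le> D" using supported_in_slab_bounds[OF sc] by auto
  define J where "J t q = exp (- \<i> * complex_of_real (t * \<sigma> + q \<bullet> \<xi>)) * cone_transform k \<phi> (t, q)" for t q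
  have J_cont: "continuous_on UNIV (\<lambda>z. J (fst z) (snd z))"
    unfolding J_def
    by (intro continuous_intros continuous_on_compose2[OF continuous_on_cone_transform[OF c\<phi> sc]]) auto
  have J_eq_0: "J t q = 0" if "(t, q) \<notin> {- inverse c1..- inverse c2} \<times> cball 0 (D * inverse c1)" for t q
  proof (rule ccontr)
    assume "J t q \<noteq> 0"
    then have nz: "cone_transform k \<phi> (t, q) \<noteq> 0" by (auto simp: J_def)
    note d = cone_transform_support[OF sc nz]
    have "D * (- t) \<le> D * inverse c1" using d(1) c(3) by (intro mult_left_mono) auto
    then show False using that d by auto
  qed
  have "(\<integral>s. slab_kernel k \<phi> \<sigma> \<xi> q s \<partial>lborel) = (\<integral>t. J t q \<partial>lborel)" for q
  proof -
    have "(\<integral>s. slab_kernel k \<phi> \<sigma> \<xi> q s \<partial>lborel) =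
        (\<integral>t. (if t < 0 then (inverse t)\<^sup>2 *\<^sub>R slab_kernel k \<phi> \<sigma> \<xi> q (- inverse t) else 0) \<partial>lborel)"
      by (rule lborel_integral_reciprocal_substitution[OF _ c(1,2)])
         (use continuous_on_slice_right[OF continuous_on_slab_kernel[OF c\<phi> sc]] slab_kernel_eq_0[OF sc] in auto)
    also have "\<dots> = (\<integral>t. J t q \<partial>lborel)"
    proof (rule Bochner_Integration.integral_cong[OF refl])
      fix t :: real
      show "(if t < 0 then (inverse t)\<^sup>2 *\<^sub>R slab_kernel k \<phi> \<sigma> \<xi> q (- inverse t) else 0) = J t q"
      proof (cases "t < 0")
        case True
        have "(inverse t)\<^sup>2 *\<^sub>R slab_kernel k \<phi> \<sigma> \<xi> q (- inverse t) = complex_of_real ((- inverse t) ^ (k + 2)) *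
            exp (- \<i> * complex_of_real (t * \<sigma>)) * exp (- \<i> * complex_of_real (q \<bullet> \<xi>)) *
            \<phi> ((- inverse t) *\<^sub>R q, - inverse t)"
          by (simp add: slab_kernel_def scaleR_conv_of_real power2_eq_square algebra_simps)
        also have "\<dots> = J t q"
          using True by (simp add: J_def cone_transform_def exp_add[symmetric] algebra_simps)
        finally show ?thesis using True by simp
      qed (simp add: J_def cone_transform_def)
    qed
    finally show ?thesis .
  qed
  then have "(\<integral>q. \<integral>s. slab_kernel k \<phi> \<sigma> \<xi> q s \<partial>lborel \<partial>lborel) = (\<integral>q. \<integral>t. J t q \<partial>lborel \<partial>lborel)"
    by simp
  also have "\<dots> = (\<integral>z. J (fst z) (snd z) \<partial>lborel)"
    using lborel_pair_integral_compact_support(2)[where K="{- inverse c1..- inverse c2} \<times> cball 0 (D * inverse c1)",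
        OF J_cont _ J_eq_0]
    by (simp add: compact_Times)
  also have "\<dots> = fourier (cone_transform k \<phi>) (\<sigma>, \<xi>)"
    by (simp add: fourier_def J_def inner_prod_def mult.commute)
  finally show ?thesis ..
qed

theorem fourier_ray_integral_eq_fourier_cone_transform:
  fixes \<phi> :: "'a::euclidean_space \<times> real \<Rightarrow> complex"
  assumes "continuous_on UNIV \<phi>" "supported_in_slab \<phi> c1 c2 D"
  shows "fourier (ray_integral k \<phi> a) \<xi> = fourier (cone_transform k \<phi>) (a \<bullet> \<xi>, \<xi>)"
  using fourier_ray_integral[OF assms] fourier_cone_transform[OF assms] by simp

section \<open>The range of the divergent beam transform\<close>

lemma norm_Pair_one_pos: "norm (p, 1::real) > 0"
proof -
  have "(p, 1::real) \<noteq> 0" by (simp add: zero_prod_def)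
  then show ?thesis by simp
qed

lemma snd_hemi_point: "snd (hemi_point p) = 1 / norm (p, 1::real)"
  by (simp add: hemi_point_def)

lemma hemi_point_in_upper_hemisphere: "hemi_point p \<in> upper_hemisphere"
  using norm_Pair_one_pos[of p] by (simp del: scaleR_Pair add: hemi_point_def upper_hemisphere_def)

lemma hemi_point_inverse:
  assumes "v \<in> upper_hemisphere"
  shows "hemi_point ((1 / snd v) *\<^sub>R fst v) = v"
proof -
  obtain w t where v: "v = (w, t)" by (cases v)
  have t: "t > 0" and n: "norm (w, t) = 1" using assms by (auto simp: upper_hemisphere_def v)
  have e: "((1 / t) *\<^sub>R w, 1::real) = (1 / t) *\<^sub>R (w, t)" using t by simp
  have "norm ((1 / t) *\<^sub>R w, 1::real) = 1 / t" unfolding e using n t by (simp del: scaleR_Pair)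
  then have "hemi_point ((1 / t) *\<^sub>R w) = (1 / (1 / t)) *\<^sub>R ((1 / t) *\<^sub>R (w, t))"
    unfolding hemi_point_def e[symmetric] by simp
  also have "\<dots> = (w, t)" using t by (simp only: scaleR_scaleR) simp
  finally show ?thesis using v by simp
qed

lemma beam_transform_hemi_point:
  fixes f :: "'a::euclidean_space \<times> real \<Rightarrow> real"
  assumes van: "\<And>y s. s \<le> 0 \<Longrightarrow> f (y, s) = 0"
  shows "beam_transform k f (a, 0) (hemi_point p) =
     norm (p, 1::real) ^ (k + 1) * (\<integral>s. f (a + s *\<^sub>R p, s) * s ^ k \<partial>lborel)"
proof -
  define N where "N = norm (p, 1::real)"
  have N: "N > 0" using norm_Pair_one_pos by (simp add: N_def)
  define g where "g r = f ((a, 0) + r *\<^sub>R hemi_point p) * r ^ k" for r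
  have "beam_transform k f (a, 0) (hemi_point p) = (\<integral>r. indicator {0..} r *\<^sub>R g r \<partial>lborel)"
    by (simp add: beam_transform_def set_lebesgue_integral_def g_def)
  also have "\<dots> = (\<integral>r. g r \<partial>lborel)"
  proof (rule Bochner_Integration.integral_cong[OF refl])
    fix r :: real
    show "indicator {0..} r *\<^sub>R g r = g r"
    proof (cases "r \<ge> 0")
      case False
      have "snd ((a, 0) + r *\<^sub>R hemi_point p) \<le> 0"
        using False N by (simp add: hemi_point_def N_def[symmetric] divide_nonpos_pos)
      then have "f (fst ((a, 0) + r *\<^sub>R hemi_point p), snd ((a, 0) + r *\<^sub>R hemi_point p)) = 0"
        by (rule van)
      then have "g r = 0" unfolding g_def by (simp only: prod.collapse mult_zero_left)
      then show ?thesis by simp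
    qed simp
  qed
  also have "\<dots> = \<bar>N\<bar> *\<^sub>R (\<integral>x. g (0 + N * x) \<partial>lborel)"
    by (rule lborel_integral_real_affine) (use N in simp)
  also have "\<dots> = N * (\<integral>x. N ^ k * (f (a + x *\<^sub>R p, x) * x ^ k) \<partial>lborel)"
  proof -
    have "g (0 + N * x) = N ^ k * (f (a + x *\<^sub>R p, x) * x ^ k)" for x
    proof -
      have "(a, 0) + (N * x) *\<^sub>R hemi_point p = (a + x *\<^sub>R p, x)"
        using N by (simp add: hemi_point_def N_def[symmetric])
      then show ?thesis by (simp add: g_def power_mult_distrib)
    qed
    then show ?thesis using N by simp
  qed
  also have "\<dots> = N ^ (k + 1) * (\<integral>s. f (a + s *\<^sub>R p, s) * s ^ k \<partial>lborel)"
    by simp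
  finally show ?thesis by (simp add: N_def)
qed

lemma proj_data_rescale: "norm (p, 1::real) ^ (k + 1) * proj_data k u a p = u a (hemi_point p)"
  using norm_Pair_one_pos[of p] by (simp add: proj_data_def snd_hemi_point power_one_over)

lemma proj_data_eq_integral:
  assumes "\<And>y s. s \<le> 0 \<Longrightarrow> f (y, s) = 0"
    and "\<And>v. v \<in> upper_hemisphere \<Longrightarrow> u a v = beam_transform k f (a, 0) v"
  shows "proj_data k u a p = (\<integral>s. f (a + s *\<^sub>R p, s) * s ^ k \<partial>lborel)"
proof -
  have "norm (p, 1::real) ^ (k + 1) * proj_data k u a p = beam_transform k f (a, 0) (hemi_point p)"
    unfolding proj_data_rescale by (rule assms(2)[OF hemi_point_in_upper_hemisphere])
  also have "\<dots> = norm (p, 1::real) ^ (k + 1) * (\<integral>s. f (a + s *\<^sub>R p, s) * s ^ k \<partial>lborel)"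
    by (rule beam_transform_hemi_point) (use assms(1) in auto)
  finally show ?thesis using norm_Pair_one_pos[of p] by simp
qed

lemma open_upper_half: "open (upper_half :: ('b::euclidean_space \<times> real) set)"
  unfolding upper_half_def by (rule open_Collect_less) (auto intro: continuous_intros)

lemma Cc_inf_half_continuous:
  fixes f :: "'a::euclidean_space \<times> real \<Rightarrow> real"
  assumes "Cc_inf_half f"
  shows "continuous_on UNIV f"
  using assms
  by (intro continuous_on_vanishing_outside[OF open_upper_half _ _ _ notin_tsupp_eq_0])
     (auto simp: Cc_inf_half_def tsupp_def smooth_on_imp_continuous_on)

lemma Cc_inf_half_supported_in_slab:
  fixes f :: "'a::euclidean_space \<times> real \<Rightarrow> real"
  assumes "Cc_inf_half f"
  obtains c1 c2 D where "supported_in_slab (\<lambda>z. complex_of_real (f z)) c1 c2 D" "D > 0"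
proof -
  have K: "compact (tsupp f)" "tsupp f \<subseteq> upper_half"
    using assms by (auto simp: Cc_inf_half_def)
  show ?thesis
  proof (cases "tsupp f = {}")
    case True
    then have "supported_in_slab (\<lambda>z. complex_of_real (f z)) 1 1 1"
      using notin_tsupp_eq_0[of _ f] by (simp add: supported_in_slab_def)
    then show ?thesis using that by simp
  next
    case False
    obtain x0 where x0: "x0 \<in> tsupp f" "\<And>y. y \<in> tsupp f \<Longrightarrow> snd x0 \<le> snd y"
      using continuous_attains_inf[OF K(1) False continuous_on_snd[OF continuous_on_id]] by blast
    have "snd x0 > 0" using x0(1) K(2) by (auto simp: upper_half_def)
    obtain B where B: "B > 0" "\<And>x. x \<in> tsupp f \<Longrightarrow> norm x \<le> B"
      using compact_imp_bounded[OF K(1)] bounded_pos by metis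
    have "supported_in_slab (\<lambda>z. complex_of_real (f z)) (snd x0) (max (snd x0) B) B"
      unfolding supported_in_slab_def
    proof (intro conjI allI impI)
      fix y s assume "complex_of_real (f (y, s)) \<noteq> 0"
      then have m: "(y, s) \<in> tsupp f" using notin_tsupp_eq_0[of "(y, s)" f] by auto
      show "snd x0 \<le> s" using x0(2)[OF m] by simp
      have "norm (y, s) \<le> B" by (rule B(2)[OF m])
      then show "s \<le> max (snd x0) B" "norm y \<le> B"
        using norm_snd_le[of s y] norm_fst_le[of y s] by auto
    qed (use \<open>snd x0 > 0\<close> B in auto)
    then show ?thesis using that B by blast
  qed
qed

text \<open>On \<open>t < 0\<close> the cone transform is \<open>f\<close> composed with the smooth map \<open>(t, q) \<mapsto> (-1/t) (q, 1)\<close>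
  into the upper half space; it extends smoothly by zero because it vanishes for \<open>-1/c2 < t < 0\<close>.\<close>
lemma smooth_on_cone_transform:
  fixes f :: "'a::euclidean_space \<times> real \<Rightarrow> real"
  assumes f: "smooth_on upper_half f" and c1: "0 < c2" and van: "\<And>y s. s > c2 \<Longrightarrow> f (y, s) = 0"
  shows "smooth_on UNIV (cone_transform k (\<lambda>z. complex_of_real (f z)))"
proof -
  define T where "T = {z::real \<times> 'a. fst z < 0}"
  have T: "open T" unfolding T_def by (rule open_Collect_less) (auto intro: continuous_intros)
  have nz: "\<And>z. z \<in> T \<Longrightarrow> fst z \<noteq> 0" by (auto simp: T_def)
  have s1: "smooth_on T (\<lambda>z. - (inverse (fst z) ^ 1))"
    by (rule smooth_on_compose_linear[OF bounded_linear_minus[OF bounded_linear_ident] smooth_on_inverse_power_fst[OF T nz]])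
  have s: "smooth_on T (\<lambda>z. - inverse (fst z))" using s1 by simp
  have c1': "smooth_on T (\<lambda>z. (- 1) ^ (k + 2) * inverse (fst z) ^ (k + 2))"
    by (rule smooth_on_mult[OF smooth_on_const[OF T] smooth_on_inverse_power_fst[OF T nz]])
  have c: "smooth_on T (\<lambda>z. (- inverse (fst z)) ^ (k + 2))"
    by (rule smooth_on_cong[OF c1']) (simp add: power_minus[of "inverse _"])
  have A: "smooth_on T (\<lambda>z::real \<times> 'a. (snd z, 0::real) + (0, 1))"
    by (rule smooth_on_add[OF smooth_on_linear[OF T] smooth_on_const[OF T]])
       (intro bounded_linear_Pair bounded_linear_snd bounded_linear_zero)
  have Phi: "smooth_on T (\<lambda>z. (- inverse (fst z)) *\<^sub>R ((snd z, 0::real) + (0, 1)))"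
    by (rule smooth_on_scaleR[OF s A])
  have img: "(- inverse (fst z)) *\<^sub>R ((snd z, 0::real) + (0, 1)) \<in> upper_half" if "z \<in> T" for z
    using that by (simp add: upper_half_def T_def)
  have fPhi: "smooth_on T (\<lambda>z. f ((- inverse (fst z)) *\<^sub>R ((snd z, 0::real) + (0, 1))))"
    by (rule smooth_on_compose[OF f Phi img])
  have H0: "smooth_on T (\<lambda>z. (- inverse (fst z)) ^ (k + 2) *\<^sub>R f ((- inverse (fst z)) *\<^sub>R ((snd z, 0::real) + (0, 1))))"
    by (rule smooth_on_scaleR[OF c fPhi])
  define C where "C = {z::real \<times> 'a. fst z \<le> - inverse c2}"
  have C: "closed C" unfolding C_def by (rule closed_Collect_le) (auto intro: continuous_intros)
  have CT: "C \<subseteq> T" using c1 by (auto simp: C_def T_def) (smt (verit) inverse_positive_iff_positive)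
  have vanC: "(- inverse (fst z)) ^ (k + 2) *\<^sub>R f ((- inverse (fst z)) *\<^sub>R ((snd z, 0::real) + (0, 1))) = 0"
    if "z \<in> T" "z \<notin> C" for z
  proof -
    have t0: "fst z < 0" and t1: "fst z > - inverse c2" using that by (auto simp: T_def C_def)
    have "- inverse (fst z) > c2" using t0 t1 c1
      by (smt (verit) inverse_less_iff_less_neg inverse_minus_eq inverse_inverse_eq)
    then have "f ((- inverse (fst z)) *\<^sub>R snd z, - inverse (fst z)) = 0" by (rule van)
    then show ?thesis by simp
  qed
  have "smooth_on UNIV (\<lambda>z. if z \<in> T then (- inverse (fst z)) ^ (k + 2) *\<^sub>R
      f ((- inverse (fst z)) *\<^sub>R ((snd z, 0::real) + (0, 1))) else 0)"
    by (rule smooth_on_extend_zero[OF H0 C CT vanC])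
  from smooth_on_compose_linear[OF bounded_linear_of_real this] show ?thesis
    by (rule smooth_on_cong) (simp add: T_def cone_transform_def)
qed

definition cone_transform_inv :: "nat \<Rightarrow> (real \<times> 'a::euclidean_space \<Rightarrow> complex) \<Rightarrow> 'a \<times> real \<Rightarrow> complex" where
  "cone_transform_inv k h z = (if snd z > 0 then complex_of_real (inverse (snd z) ^ (k + 2)) *
       h (- inverse (snd z), inverse (snd z) *\<^sub>R fst z) else 0)"

lemma smooth_on_Re_cone_transform_inv:
  fixes h :: "real \<times> 'a::euclidean_space \<Rightarrow> complex"
  assumes h: "smooth_on UNIV h"
  shows "smooth_on upper_half (\<lambda>z. Re (cone_transform_inv k h z))"
proof -
  define T where "T = (upper_half :: ('a \<times> real) set)"
  have T: "open T" unfolding T_def by (rule open_upper_half)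
  have nz: "\<And>z. z \<in> T \<Longrightarrow> snd z \<noteq> 0" by (auto simp: T_def upper_half_def)
  have i: "smooth_on T (\<lambda>z. inverse (snd z) ^ 1)" by (rule smooth_on_inverse_power_snd[OF T nz])
  have B: "smooth_on T (\<lambda>z::'a \<times> real. (0::real, fst z) + (- 1, 0))"
    by (rule smooth_on_add[OF smooth_on_linear[OF T] smooth_on_const[OF T]])
       (intro bounded_linear_Pair bounded_linear_fst bounded_linear_zero)
  have Psi: "smooth_on T (\<lambda>z. inverse (snd z) ^ 1 *\<^sub>R ((0::real, fst z) + (- 1, 0)))"
    by (rule smooth_on_scaleR[OF i B])
  have hPsi: "smooth_on T (\<lambda>z. h (inverse (snd z) ^ 1 *\<^sub>R ((0::real, fst z) + (- 1, 0))))"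
    by (rule smooth_on_compose[OF h Psi]) simp
  have c: "smooth_on T (\<lambda>z. inverse (snd z) ^ (k + 2))" by (rule smooth_on_inverse_power_snd[OF T nz])
  have prod: "smooth_on T (\<lambda>z. inverse (snd z) ^ (k + 2) *\<^sub>R h (inverse (snd z) ^ 1 *\<^sub>R ((0::real, fst z) + (- 1, 0))))"
    by (rule smooth_on_scaleR[OF c hPsi])
  have re: "smooth_on T (\<lambda>z. Re (inverse (snd z) ^ (k + 2) *\<^sub>R h (inverse (snd z) ^ 1 *\<^sub>R ((0::real, fst z) + (- 1, 0)))))"
    by (rule smooth_on_compose_linear[OF bounded_linear_Re prod])
  show ?thesis unfolding T_def[symmetric]
    by (rule smooth_on_cong[OF re]) (auto simp: T_def upper_half_def scaleR_conv_of_real cone_transform_inv_def)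
qed

lemma supported_in_slab_cone_transform_inv:
  assumes hz: "\<And>t q. h (t, q) \<noteq> 0 \<Longrightarrow> t \<in> {-M0..-m0} \<and> norm q \<le> - R * t"
    and m: "0 < m0" "m0 \<le> M0" "0 \<le> R"
  shows "supported_in_slab (cone_transform_inv k h) (1 / M0) (1 / m0) R"
  unfolding supported_in_slab_def
proof (intro conjI allI impI)
  show "0 < 1 / M0" "1 / M0 \<le> 1 / m0" "0 \<le> R" using m by (simp_all add: frac_le)
  fix y s assume nz: "cone_transform_inv k h (y, s) \<noteq> 0"
  then have s0: "s > 0" by (simp add: cone_transform_inv_def split: if_splits)
  with nz have "h (- inverse s, inverse s *\<^sub>R y) \<noteq> 0" by (simp add: cone_transform_inv_def)
  from hz[OF this] have "inverse s \<le> M0" "m0 \<le> inverse s" "inverse s * norm y \<le> inverse s * R"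
    using s0 by (auto simp: mult.commute)
  then show "1 / M0 \<le> s" "s \<le> 1 / m0" "norm y \<le> R"
    using s0 m by (simp_all add: field_simps)
qed

lemma continuous_on_cone_transform_inv:
  assumes ch: "continuous_on UNIV h" and sc: "supported_in_slab (cone_transform_inv k h) c1 c2 D"
  shows "continuous_on UNIV (cone_transform_inv k h)"
proof (rule continuous_on_vanishing_outside[of "{z. snd z > 0}" _ "{z. c1 \<le> snd z}"])
  have "continuous_on {z::'a \<times> real. snd z > 0} (\<lambda>z. complex_of_real (inverse (snd z) ^ (k + 2)) *
      h (- inverse (snd z), inverse (snd z) *\<^sub>R fst z))"
    by (intro continuous_intros continuous_on_compose_UNIV[OF ch]) auto
  then show "continuous_on {z. snd z > 0} (cone_transform_inv k h)"
    by (rule continuous_on_cong[THEN iffD1, rotated 2]) (auto simp: cone_transform_inv_def)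
  show "open {z::'a \<times> real. snd z > 0}" "closed {z::'a \<times> real. c1 \<le> snd z}"
    by (auto intro!: open_Collect_less closed_Collect_le continuous_intros)
  show "{z::'a \<times> real. c1 \<le> snd z} \<subseteq> {z. snd z > 0}"
    using supported_in_slab_bounds[OF sc] by auto
  show "cone_transform_inv k h z = 0" if "z \<notin> {z. c1 \<le> snd z}" for z
    using supported_in_slabD(1)[OF sc, of "fst z" "snd z"] that by auto
qed

lemma cone_transform_cone_transform_inv:
  assumes "\<And>t q. h (t, q) \<noteq> 0 \<Longrightarrow> t < 0"
  shows "cone_transform k (cone_transform_inv k h) = h"
proof
  fix z :: "real \<times> 'a"
  obtain t q where z: "z = (t, q)" by (cases z)
  show "cone_transform k (cone_transform_inv k h) z = h z"
  proof (cases "t < 0")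
    case True
    define s where "s = - inverse t"
    have s0: "s > 0" and t: "- inverse s = t" using True by (simp_all add: s_def)
    have "cone_transform_inv k h (s *\<^sub>R q, s) = complex_of_real (inverse s ^ (k + 2)) * h (t, q)"
      using s0 t by (simp add: cone_transform_inv_def)
    then have "cone_transform k (cone_transform_inv k h) (t, q) =
        complex_of_real (s ^ (k + 2)) * (complex_of_real (inverse s ^ (k + 2)) * h (t, q))"
      using True by (simp add: cone_transform_def s_def)
    also have "\<dots> = complex_of_real ((s * inverse s) ^ (k + 2)) * h (t, q)"
      by (simp add: power_mult_distrib)
    finally show ?thesis using s0 z by simp
  next
    case False
    then show ?thesis using assms[of t q] z by (auto simp: cone_transform_def)
  qed
qed

lemma Cc_inf_half_Re_cone_transform_inv:
  assumes h: "smooth_on UNIV h" and sc: "supported_in_slab (cone_transform_inv k h) c1 c2 D"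
  shows "Cc_inf_half (\<lambda>z. Re (cone_transform_inv k h z))"
proof -
  define K where "K = cball (0::'a) D \<times> {c1..c2}"
  have K: "compact K" unfolding K_def by (intro compact_Times compact_cball compact_Icc)
  have sub: "{z. Re (cone_transform_inv k h z) \<noteq> 0} \<subseteq> K"
  proof
    fix z assume "z \<in> {z. Re (cone_transform_inv k h z) \<noteq> 0}"
    then have "cone_transform_inv k h (fst z, snd z) \<noteq> 0" by auto
    from supported_in_slabD[OF sc this] show "z \<in> K" by (simp add: K_def mem_Times_iff)
  qed
  have "K \<subseteq> upper_half"
    using supported_in_slab_bounds[OF sc] by (auto simp: K_def upper_half_def mem_Times_iff)
  moreover have "tsupp (\<lambda>z. Re (cone_transform_inv k h z)) \<subseteq> K"
    by (rule tsupp_subset[OF sub compact_imp_closed[OF K]])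
  ultimately show ?thesis
    unfolding Cc_inf_half_def using smooth_on_Re_cone_transform_inv[OF h] compact_tsupp[OF sub K] by blast
qed

lemma ray_integral_eq_if_fourier_eq:
  fixes w :: "'a::euclidean_space \<Rightarrow> 'a \<Rightarrow> real" and \<phi> :: "'a \<times> real \<Rightarrow> complex"
  assumes cw: "continuous_on UNIV (\<lambda>z. w (fst z) (snd z))" and comp: "\<And>a. compact (tsupp (w a))"
    and W: "\<And>a \<xi>. fourier (\<lambda>p. complex_of_real (w a p)) \<xi> = H (a \<bullet> \<xi>, \<xi>)"
    and H: "AE z in lborel. H z = fourier (cone_transform k \<phi>) z"
    and c\<phi>: "continuous_on UNIV \<phi>" and sc: "supported_in_slab \<phi> c1 c2 D"
  shows "complex_of_real (w a p) = ray_integral k \<phi> a p"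
proof -
  define g where "g a p = complex_of_real (w a p) - ray_integral k \<phi> a p" for a p
  have cg: "continuous_on UNIV (\<lambda>z. g (fst z) (snd z))"
    unfolding g_def by (intro continuous_intros cw continuous_on_ray_integral[OF c\<phi> sc])
  define K where "K a = tsupp (w a) \<union> cball 0 ((D + norm a) / c1)" for a
  have K: "compact (K a)" for a unfolding K_def using comp by (auto intro!: compact_Un)
  have w_eq_0: "complex_of_real (w a p) = 0" and ray_eq_0: "ray_integral k \<phi> a p = 0"
    if "p \<notin> K a" for a p
    using that notin_tsupp_eq_0[of p "w a"] ray_integral_eq_0[OF sc, of a p k] by (auto simp: K_def)
  have cw_a: "continuous_on UNIV (\<lambda>p. complex_of_real (w a p))" for a
    by (intro continuous_on_of_real continuous_on_slice_right[OF cw])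
  have cray_a: "continuous_on UNIV (ray_integral k \<phi> a)" for a
    by (rule continuous_on_slice_right[OF continuous_on_ray_integral[OF c\<phi> sc]])
  have int: "integrable lborel (\<lambda>p. exp (- \<i> * complex_of_real (p \<bullet> \<xi>)) * F p)"
    if "continuous_on UNIV F" "\<And>p. p \<notin> K a \<Longrightarrow> F p = 0" for F a \<xi>
    by (rule integrable_lborel_compact_support[OF _ K[of a]]) (use that in \<open>auto intro!: continuous_intros\<close>)
  have "fourier (g a) \<xi> = H (a \<bullet> \<xi>, \<xi>) - fourier (cone_transform k \<phi>) (a \<bullet> \<xi>, \<xi>)" for a \<xi>
  proof -
    have "fourier (g a) \<xi> = fourier (\<lambda>p. complex_of_real (w a p)) \<xi> - fourier (ray_integral k \<phi> a) \<xi>"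
      unfolding fourier_def g_def right_diff_distrib
      by (rule Bochner_Integration.integral_diff[OF int[OF cw_a w_eq_0] int[OF cray_a ray_eq_0]])
    then show ?thesis
      using W fourier_ray_integral_eq_fourier_cone_transform[OF c\<phi> sc] by simp
  qed
  then have AE_fourier: "AE a in lborel. AE \<xi> in lborel. fourier (g a) \<xi> = 0"
    using AE_lborel_inner_Pair[OF H] by simp
  have g_eq_0: "g a p = 0" if "p \<notin> K a" for a p
    using w_eq_0[OF that] ray_eq_0[OF that] by (simp add: g_def)
  have "AE a in lborel. \<forall>p. g a p = 0"
    using AE_fourier
  proof (rule eventually_mono)
    fix a assume AE_a: "AE \<xi> in lborel. fourier (g a) \<xi> = 0"
    have cga: "continuous_on UNIV (g a)" by (rule continuous_on_slice_right[OF cg])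
    have "continuous_on UNIV (fourier (g a))" by (rule continuous_on_fourier[OF cga K g_eq_0])
    then have "fourier (g a) \<xi> = 0" for \<xi> using continuous_AE_zero_imp_zero AE_a by blast
    then show "\<forall>p. g a p = 0" using fourier_zero_imp_zero[OF cga K g_eq_0] by blast
  qed
  then have "AE a in lborel. g a p = 0" by (rule eventually_mono) blast
  then have "g a p = 0" by (rule continuous_AE_zero_imp_zero[OF continuous_on_slice_left[OF cg]])
  then show ?thesis by (simp add: g_def)
qed

lemma continuous_on_proj_data:
  assumes "smooth_on_hemi u"
  shows "continuous_on UNIV (\<lambda>z. proj_data k u (fst z) (snd z))"
proof -
  have "continuous_on UNIV (\<lambda>(a, p). u a (hemi_point p))"
    using assms by (simp add: smooth_on_hemi_def smooth_on_imp_continuous_on)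
  then have "continuous_on UNIV (\<lambda>z. (1 / norm (snd z, 1::real)) ^ (k + 1) * u (fst z) (hemi_point (snd z)))"
    using norm_Pair_one_pos by (intro continuous_intros) (auto simp: case_prod_beta' less_imp_neq[symmetric])
  then show ?thesis by (simp add: proj_data_def snd_hemi_point)
qed

lemma closed_truncated_cone: "closed {(t, p::'a::real_normed_vector). t \<in> {- M0..- m0} \<and> norm p \<le> - R * t}"
proof -
  have "{(t, p::'a). t \<in> {- M0..- m0} \<and> norm p \<le> - R * t} =
      {z. - M0 \<le> fst z} \<inter> {z. fst z \<le> - m0} \<inter> {z. norm (snd z) \<le> - R * fst z}" by auto
  then show ?thesis by (auto intro!: closed_Int closed_Collect_le continuous_intros)
qed

lemma range_conditions_necessary:
  fixes k :: nat and u :: "'a::euclidean_space \<Rightarrow> 'a \<times> real \<Rightarrow> real"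
  assumes "\<exists>f. Cc_inf_half f \<and> (\<forall>a v. v \<in> upper_hemisphere \<longrightarrow> u a v = beam_transform k f (a, 0) v)"
  shows "(\<forall>a. compact (tsupp (proj_data k u a))) \<and>
          (\<exists>H :: real \<times> 'a \<Rightarrow> complex.
             (\<forall>a xi. fourier_p (proj_data k u) a xi = H (a \<bullet> xi, xi)) \<and>
             (\<exists>(h :: real \<times> 'a \<Rightarrow> complex) m0 M0 R.
                smooth_on UNIV h \<and> inv_fourier_of h H \<and>
                0 < m0 \<and> m0 < M0 \<and> 0 < R \<and>
                tsupp h \<subseteq> {(t, p). t \<in> {-M0..-m0} \<and> norm p \<le> - R * t}))"
proof -
  obtain f where f: "Cc_inf_half f"
    and rel: "\<And>a v. v \<in> upper_hemisphere \<Longrightarrow> u a v = beam_transform k f (a, 0) v"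
    using assms by blast
  define \<phi> where "\<phi> z = complex_of_real (f z)" for z
  obtain c1 c2 D where sc: "supported_in_slab \<phi> c1 c2 D" and D: "D > 0"
    using Cc_inf_half_supported_in_slab[OF f] unfolding \<phi>_def by blast
  have c\<phi>: "continuous_on UNIV \<phi>"
    unfolding \<phi>_def by (intro continuous_intros Cc_inf_half_continuous[OF f])
  have c: "0 < c1" "c1 \<le> c2" using supported_in_slab_bounds[OF sc] by auto
  have f_eq_0: "f (y, s) = 0" if "s \<le> 0 \<or> s > c2" for y s
    using that c supported_in_slabD(1,2)[OF sc, of y s] by (force simp: \<phi>_def)
  have w: "complex_of_real (proj_data k u a p) = ray_integral k \<phi> a p" for a p
  proof -
    have "proj_data k u a p = (\<integral>s. f (a + s *\<^sub>R p, s) * s ^ k \<partial>lborel)"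
      by (rule proj_data_eq_integral) (use f_eq_0 rel in auto)
    then show ?thesis unfolding \<phi>_def ray_integral_of_real by simp
  qed
  have "compact (tsupp (proj_data k u a))" for a
  proof (rule compact_tsupp[OF _ compact_cball])
    show "{p. proj_data k u a p \<noteq> 0} \<subseteq> cball 0 ((D + norm a) / c1)"
    proof (rule subsetI, rule ccontr)
      fix p assume "p \<in> {p. proj_data k u a p \<noteq> 0}" "p \<notin> cball 0 ((D + norm a) / c1)"
      then show False using w[of a p] ray_integral_eq_0[OF sc, of a p k] by simp
    qed
  qed
  moreover define h where "h = cone_transform k \<phi>"
  have "fourier_p (proj_data k u) a \<xi> = fourier_full h (a \<bullet> \<xi>, \<xi>)" for a \<xi>
    by (simp add: fourier_p_eq_fourier fourier_full_eq_fourier w h_def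
        fourier_ray_integral_eq_fourier_cone_transform[OF c\<phi> sc])
  moreover have "smooth_on UNIV h"
    unfolding h_def \<phi>_def
    by (rule smooth_on_cone_transform[of f c2 k]) (use f c f_eq_0 in \<open>auto simp: Cc_inf_half_def\<close>)
  moreover have "inv_fourier_of h (fourier_full h)" by (simp add: inv_fourier_of_def)
  (* the factor 2 keeps m0 < M0 strict when c1 = c2 *)
  moreover have "0 < 1 / (2 * c2)" "1 / (2 * c2) < 1 / c1" using c by (auto simp: field_simps)
  moreover have "tsupp h \<subseteq> {(t, p). t \<in> {- (1 / c1)..- (1 / (2 * c2))} \<and> norm p \<le> - D * t}"
  proof (rule tsupp_subset[OF _ closed_truncated_cone], rule subsetI)
    fix z assume "z \<in> {z. h z \<noteq> 0}"
    then obtain t q where z: "z = (t, q)" and nz: "cone_transform k \<phi> (t, q) \<noteq> 0"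
      by (cases z) (auto simp: h_def)
    have "- inverse c2 \<le> - (1 / (2 * c2))" using c by (simp add: field_simps)
    with cone_transform_support[OF sc nz] show "z \<in> {(t, p). t \<in> {- (1 / c1)..- (1 / (2 * c2))} \<and> norm p \<le> - D * t}"
      using z by (auto simp: inverse_eq_divide)
  qed
  ultimately show ?thesis using D by blast
qed

lemma range_conditions_sufficient:
  fixes k :: nat and u :: "'a::euclidean_space \<Rightarrow> 'a \<times> real \<Rightarrow> real"
  assumes us: "smooth_on_hemi u"
    and "(\<forall>a. compact (tsupp (proj_data k u a))) \<and>
          (\<exists>H :: real \<times> 'a \<Rightarrow> complex.
             (\<forall>a xi. fourier_p (proj_data k u) a xi = H (a \<bullet> xi, xi)) \<and>
             (\<exists>(h :: real \<times> 'a \<Rightarrow> complex) m0 M0 R.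
                smooth_on UNIV h \<and> inv_fourier_of h H \<and>
                0 < m0 \<and> m0 < M0 \<and> 0 < R \<and>
                tsupp h \<subseteq> {(t, p). t \<in> {-M0..-m0} \<and> norm p \<le> - R * t}))"
  shows "\<exists>f. Cc_inf_half f \<and> (\<forall>a v. v \<in> upper_hemisphere \<longrightarrow> u a v = beam_transform k f (a, 0) v)"
proof -
  obtain H h m0 M0 R where comp: "\<And>a. compact (tsupp (proj_data k u a))"
      and HW: "\<And>a \<xi>. fourier_p (proj_data k u) a \<xi> = H (a \<bullet> \<xi>, \<xi>)"
      and hs: "smooth_on UNIV h" and hinv: "inv_fourier_of h H" and m: "0 < m0" "m0 < M0" "0 < R"
      and supp: "tsupp h \<subseteq> {(t, p). t \<in> {-M0..-m0} \<and> norm p \<le> - R * t}"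
    using assms(2) by blast
  have hz: "t \<in> {-M0..-m0} \<and> norm q \<le> - R * t" if "h (t, q) \<noteq> 0" for t q
    using supp notin_tsupp_eq_0[of "(t, q)" h] that by blast
  define \<phi> where "\<phi> = cone_transform_inv k h"
  have sc: "supported_in_slab \<phi> (1 / M0) (1 / m0) R"
    unfolding \<phi>_def by (rule supported_in_slab_cone_transform_inv[OF hz]) (use m in auto)
  have c\<phi>: "continuous_on UNIV \<phi>"
    unfolding \<phi>_def by (rule continuous_on_cone_transform_inv[OF smooth_on_imp_continuous_on[OF hs] sc[unfolded \<phi>_def]])
  have "cone_transform k \<phi> = h"
    unfolding \<phi>_def by (rule cone_transform_cone_transform_inv) (use hz m in force)
  then have w: "complex_of_real (proj_data k u a p) = ray_integral k \<phi> a p" for a p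
    using hinv HW
    by (intro ray_integral_eq_if_fourier_eq[OF continuous_on_proj_data[OF us] comp _ _ c\<phi> sc])
       (simp_all add: fourier_p_eq_fourier fourier_full_eq_fourier inv_fourier_of_def)
  define f where "f z = Re (\<phi> z)" for z
  have "Cc_inf_half f"
    unfolding f_def \<phi>_def by (rule Cc_inf_half_Re_cone_transform_inv[OF hs sc[unfolded \<phi>_def]])
  moreover have "u a v = beam_transform k f (a, 0) v" if v: "v \<in> upper_hemisphere" for a v
  proof -
    define p where "p = (1 / snd v) *\<^sub>R fst v"
    have "integrable lborel (\<lambda>s. \<phi> (a + s *\<^sub>R p, s) * complex_of_real s ^ k)"
      by (rule integrable_lborel_compact_support[OF _ compact_Icc[of "1 / M0" "1 / m0"]])
         (use supported_in_slabD[OF sc, of "a + _ *\<^sub>R p"] in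
          \<open>force intro!: continuous_intros continuous_on_compose_UNIV[OF c\<phi>]\<close>)+
    then have "(\<integral>s. f (a + s *\<^sub>R p, s) * s ^ k \<partial>lborel) = Re (ray_integral k \<phi> a p)"
      unfolding ray_integral_def f_def by (simp add: integral_Re[symmetric] del: of_real_power add: of_real_power[symmetric])
    also have "\<dots> = proj_data k u a p" using w[of a p] by (metis Re_complex_of_real)
    finally have "beam_transform k f (a, 0) (hemi_point p) = u a (hemi_point p)"
      using beam_transform_hemi_point[of f k a p] proj_data_rescale[of p k u a]
      by (simp add: f_def \<phi>_def cone_transform_inv_def)
    then show ?thesis using hemi_point_inverse[OF v] by (simp add: p_def)
  qed
  ultimately show ?thesis by blast
qed

theorem mainTheorem5:
  fixes k :: nat and u :: "'a::euclidean_space \<Rightarrow> 'a \<times> real \<Rightarrow> real"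
  assumes "smooth_on_hemi u"
  shows "(\<exists>f. Cc_inf_half f \<and>
            (\<forall>a v. v \<in> upper_hemisphere \<longrightarrow> u a v = beam_transform k f (a, 0) v))
     \<longleftrightarrow>
         ((\<forall>a. compact (tsupp (proj_data k u a))) \<and>
          (\<exists>H :: real \<times> 'a \<Rightarrow> complex.
             (\<forall>a xi. fourier_p (proj_data k u) a xi = H (a \<bullet> xi, xi)) \<and>
             (\<exists>(h :: real \<times> 'a \<Rightarrow> complex) m0 M0 R.
                smooth_on UNIV h \<and> inv_fourier_of h H \<and>
                0 < m0 \<and> m0 < M0 \<and> 0 < R \<and>
                tsupp h \<subseteq> {(t, p). t \<in> {-M0..-m0} \<and> norm p \<le> - R * t})))"
  using range_conditions_necessary range_conditions_sufficient[OF assms] by (rule iffI)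

end
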